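(* Under the assumptions: $G$ finitely generated sofic with generating set $S$, $(V_n,\sigma_n)$ a sofic approximation, $\{H^\omega\}_{\omega\in\mathcal X^G}$ a continuous operator over $\mathrm{Cay}(G,S)$, with either all $\sigma_n$ homomorphisms or $\{H^\omega\}$ of bounded interaction, and $(\{H^\rho_n\})_n$ an induced approximation of $\{H^\omega\}$: for every continuous $f:\mathbb R\to\mathbb R$, \[\lim_{n\to\infty}\sup_{\rho\in\mathcal X^{V_n}}\left|\frac1{|V_n|}\sum_{v\in V_n}\Big(\langle\delta_v,f(H_n^\rho)\delta_v\rangle-\langle\delta_e,f(H^{\Pi_v^{\sigma_n}(\rho)})\delta_e\rangle\Big)\right|=0.\]
   Context: $G$ finitely generated with fixed finite symmetric generating set $S\subseteq G\setminus\{e\}$; $\mathrm{Cay}(G,S)$: $x\sim y$ iff $y=sx$, edges labeled $yx^{-1}$; $d_S(g,h)=|gh^{-1}|_S$, balls $B_S$. Sofic approximation: $(V_n,\sigma_n)$, $V_n$ finite, $\sigma_n:G\to\mathrm{Sym}(V_n)$ with $|\{v:\sigma_n^g\sigma_n^h(v)=\sigma_n^{gh}(v)\}|/|V_n|\to1$, $|\{v:\sigma_n^g(v)\ne v\}|/|V_n|\to1$ ($g\ne e$). Graph $(V_n,E_n)$, $E_n=\{(v,\sigma_n^s(v))\}$ labeled $s$, metric $d_{E_n}$, balls $B_{E_n}$; $v$ is $R$-good if a label-preserving isomorphism $B_{E_n}(v,R)\to B_S(e,R)$ with $v\mapsto e$ exists (proportion of $R$-good vertices tends to 1). $(\mathcal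 X,d)$ compact metric; shift $(h.\omega)(g)=\omega(gh)$; $\Pi_w^{\sigma_n}(\rho)=(\rho(\sigma_n^g(w)))_g$. $H(x,y)=\langle\delta_x,H\delta_y\rangle$; $f(H)$ is defined by the continuous functional calculus of the self-adjoint operator $H$. Continuous operator with parameter $M$: $\{H^\omega\}$ bounded on $\ell^2(G)$, continuous coefficients, self-adjoint, $H^\omega(x,y)=0$ if $d_S(x,y)>M$, $H^\omega(xg,yg)=H^{g.\omega}(x,y)$; bounded interaction: $\omega_1|_{B_S(e,M)}=\omega_2|_{B_S(e,M)}\Rightarrow H^{\omega_1}(e,x)=H^{\omega_2}(e,x)$. Induced approximation: $\{H_n^\rho\}_{\rho\in\mathcal X^{V_n}}$ on $\ell^2(V_n)$, Borel coefficients, self-adjoint, $H_n^\rho(x,y)=0$ if $d_{E_n}(x,y)>M$, $H_n^\rho(w,v)=H^{\Pi_w^{\sigma_n}(\rho)}(e,g)$ for $4M$-good $w$, $v\in B_{E_n}(w,M)$, unique $g\in B_S(e,M)$ with $\sigma_n^g(w)=v$, and coefficients in $\{H^\omega(x,y)\}\cup\{0\}$. *)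

theory Defs
  imports "HOL-Analysis.Analysis" "HOL-Computational_Algebra.Polynomial"
begin

text \<open>Groups are written additively (type class group_add, not necessarily
commutative): g + h is the group product gh, 0 is e, -g is the inverse.\<close>

definition wlen :: "'g::group_add set \<Rightarrow> 'g \<Rightarrow> nat" where
  "wlen S g = (LEAST n. \<exists>xs. length xs = n \<and> set xs \<subseteq> S \<and> sum_list xs = g)"

definition ballS :: "'g::group_add set \<Rightarrow> nat \<Rightarrow> 'g set" where
  "ballS S R = {g. wlen S g \<le> R}"

definition generates :: "'g::group_add set \<Rightarrow> bool" where
  "generates S \<longleftrightarrow> (\<forall>g. \<exists>xs. set xs \<subseteq> S \<and> sum_list xs = g)"

definition sofic_approx :: "(nat \<Rightarrow> 'v set) \<Rightarrow> (nat \<Rightarrow> 'g::group_add \<Rightarrow> 'v \<Rightarrow> 'v) \<Rightarrow> bool" where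
  "sofic_approx V \<sigma> \<longleftrightarrow>
     (\<forall>n. finite (V n)) \<and> (\<forall>n g. bij_betw (\<sigma> n g) (V n) (V n)) \<and>
     (\<forall>g h. (\<lambda>n. real (card {v\<in>V n. \<sigma> n g (\<sigma> n h v) = \<sigma> n (g + h) v}) / real (card (V n)))
              \<longlonglongrightarrow> 1) \<and>
     (\<forall>g. g \<noteq> 0 \<longrightarrow> (\<lambda>n. real (card {v\<in>V n. \<sigma> n g v \<noteq> v}) / real (card (V n))) \<longlonglongrightarrow> 1)"

text \<open>Graph distance in (V_n, E_n), E_n = {(v, sigma_n^s v)}: d(x,y) <= R,
  walks may use edges in either direction.\<close>
definition dE_le :: "'g set \<Rightarrow> (nat \<Rightarrow> 'v set) \<Rightarrow> (nat \<Rightarrow> 'g \<Rightarrow> 'v \<Rightarrow> 'v) \<Rightarrow> nat \<Rightarrow> 'v \<Rightarrow> 'v \<Rightarrow> nat \<Rightarrow> bool" where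
  "dE_le S V \<sigma> n x y R \<longleftrightarrow>
     (\<exists>p k. k \<le> R \<and> p 0 = x \<and> p k = y \<and> (\<forall>i\<le>k. p i \<in> V n) \<and>
        (\<forall>i<k. \<exists>s\<in>S. p (Suc i) = \<sigma> n s (p i) \<or> p i = \<sigma> n s (p (Suc i))))"

definition ballE :: "'g set \<Rightarrow> (nat \<Rightarrow> 'v set) \<Rightarrow> (nat \<Rightarrow> 'g \<Rightarrow> 'v \<Rightarrow> 'v) \<Rightarrow> nat \<Rightarrow> 'v \<Rightarrow> nat \<Rightarrow> 'v set" where
  "ballE S V \<sigma> n w R = {u \<in> V n. dE_le S V \<sigma> n w u R}"

definition good :: "'g::group_add set \<Rightarrow> (nat \<Rightarrow> 'v set) \<Rightarrow> (nat \<Rightarrow> 'g \<Rightarrow> 'v \<Rightarrow> 'v) \<Rightarrow> nat \<Rightarrow> nat \<Rightarrow> 'v \<Rightarrow> bool" where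
  "good S V \<sigma> n R v \<longleftrightarrow> v \<in> V n \<and>
     (\<exists>\<phi>. bij_betw \<phi> (ballE S V \<sigma> n v R) (ballS S R) \<and> \<phi> v = 0 \<and>
        (\<forall>x\<in>ballE S V \<sigma> n v R. \<forall>y\<in>ballE S V \<sigma> n v R. \<forall>s\<in>S.
            y = \<sigma> n s x \<longleftrightarrow> \<phi> y = s + \<phi> x))"

definition Pi_sh :: "(nat \<Rightarrow> 'g \<Rightarrow> 'v \<Rightarrow> 'v) \<Rightarrow> nat \<Rightarrow> 'v \<Rightarrow> ('v \<Rightarrow> 'x) \<Rightarrow> 'g \<Rightarrow> 'x" where
  "Pi_sh \<sigma> n w \<rho> = (\<lambda>g. \<rho> (\<sigma> n g w))"

definition shift :: "'g::group_add \<Rightarrow> ('g \<Rightarrow> 'x) \<Rightarrow> 'g \<Rightarrow> 'x" where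
  "shift h \<omega> = (\<lambda>g. \<omega> (g + h))"

text \<open>Matrices A x y = <delta_x, A delta_y> indexed by a set I (I = UNIV for l2(G)).\<close>
definition mvec :: "'a set \<Rightarrow> ('a \<Rightarrow> 'a \<Rightarrow> complex) \<Rightarrow> ('a \<Rightarrow> complex) \<Rightarrow> 'a \<Rightarrow> complex" where
  "mvec I A v x = (\<Sum>\<^sub>\<infinity>y\<in>I. A x y * v y)"

definition bounded_op :: "'a set \<Rightarrow> ('a \<Rightarrow> 'a \<Rightarrow> complex) \<Rightarrow> bool" where
  "bounded_op I A \<longleftrightarrow> (\<exists>C\<ge>0. \<forall>v. finite {x\<in>I. v x \<noteq> 0} \<longrightarrow>
     ((\<lambda>x. (cmod (mvec I A v x))\<^sup>2) summable_on I) \<and>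
     (\<Sum>\<^sub>\<infinity>x\<in>I. (cmod (mvec I A v x))\<^sup>2) \<le> C\<^sup>2 * (\<Sum>x\<in>{x\<in>I. v x \<noteq> 0}. (cmod (v x))\<^sup>2))"

definition mmult :: "'a set \<Rightarrow> ('a \<Rightarrow> 'a \<Rightarrow> complex) \<Rightarrow> ('a \<Rightarrow> 'a \<Rightarrow> complex) \<Rightarrow> 'a \<Rightarrow> 'a \<Rightarrow> complex" where
  "mmult I A B x y = (\<Sum>\<^sub>\<infinity>z\<in>I. A x z * B z y)"

fun mpow :: "'a set \<Rightarrow> ('a \<Rightarrow> 'a \<Rightarrow> complex) \<Rightarrow> nat \<Rightarrow> 'a \<Rightarrow> 'a \<Rightarrow> complex" where
  "mpow I A 0 = (\<lambda>x y. if x = y then 1 else 0)"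
| "mpow I A (Suc k) = mmult I A (mpow I A k)"

definition polymat :: "'a set \<Rightarrow> ('a \<Rightarrow> 'a \<Rightarrow> complex) \<Rightarrow> real poly \<Rightarrow> 'a \<Rightarrow> 'a \<Rightarrow> complex" where
  "polymat I A p x y = (\<Sum>i\<le>degree p. complex_of_real (coeff p i) * mpow I A i x y)"

text \<open>Continuous functional calculus, matrix entry <delta_x, f(A) delta_y>:
  limit of p_k(A) for polynomials p_k converging to f uniformly on compacts
  (in particular on [-norm A, norm A], which contains the spectrum).\<close>
definition fcalc :: "'a set \<Rightarrow> ('a \<Rightarrow> 'a \<Rightarrow> complex) \<Rightarrow> (real \<Rightarrow> real) \<Rightarrow> 'a \<Rightarrow> 'a \<Rightarrow> complex" where
  "fcalc I A f x y = (THE c. \<forall>ps :: nat \<Rightarrow> real poly.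
      (\<forall>r. uniform_limit {-r..r} (\<lambda>k t. poly (ps k) t) f sequentially) \<longrightarrow>
      (\<lambda>k. polymat I A (ps k) x y) \<longlonglongrightarrow> c)"

definition continuous_operator ::
  "'g::group_add set \<Rightarrow> nat \<Rightarrow> (('g \<Rightarrow> 'x::topological_space) \<Rightarrow> 'g \<Rightarrow> 'g \<Rightarrow> complex) \<Rightarrow> bool" where
  "continuous_operator S M H \<longleftrightarrow>
     (\<forall>\<omega>. bounded_op UNIV (H \<omega>)) \<and>
     (\<forall>x y. continuous_on UNIV (\<lambda>\<omega>. H \<omega> x y)) \<and>
     (\<forall>\<omega> x y. H \<omega> x y = cnj (H \<omega> y x)) \<and>
     (\<forall>\<omega> x y. wlen S (x - y) > M \<longrightarrow> H \<omega> x y = 0) \<and>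
     (\<forall>\<omega> x y g. H \<omega> (x + g) (y + g) = H (shift g \<omega>) x y)"

definition bounded_interaction ::
  "'g::group_add set \<Rightarrow> nat \<Rightarrow> (('g \<Rightarrow> 'x) \<Rightarrow> 'g \<Rightarrow> 'g \<Rightarrow> complex) \<Rightarrow> bool" where
  "bounded_interaction S M H \<longleftrightarrow>
     (\<forall>\<omega>1 \<omega>2. (\<forall>g\<in>ballS S M. \<omega>1 g = \<omega>2 g) \<longrightarrow> (\<forall>x. H \<omega>1 0 x = H \<omega>2 0 x))"

definition induced_approx ::
  "'g::group_add set \<Rightarrow> (nat \<Rightarrow> 'v set) \<Rightarrow> (nat \<Rightarrow> 'g \<Rightarrow> 'v \<Rightarrow> 'v) \<Rightarrow> nat \<Rightarrow>
   (('g \<Rightarrow> 'x::topological_space) \<Rightarrow> 'g \<Rightarrow> 'g \<Rightarrow> complex) \<Rightarrow>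
   (nat \<Rightarrow> ('v \<Rightarrow> 'x) \<Rightarrow> 'v \<Rightarrow> 'v \<Rightarrow> complex) \<Rightarrow> bool" where
  "induced_approx S V \<sigma> M H Hn \<longleftrightarrow> (\<forall>n.
     (\<forall>x y. (\<lambda>\<rho>. Hn n \<rho> x y) \<in> borel_measurable (PiM (V n) (\<lambda>_. borel))) \<and>
     (\<forall>\<rho>\<in>PiE (V n) (\<lambda>_. UNIV).
        (\<forall>x\<in>V n. \<forall>y\<in>V n. Hn n \<rho> x y = cnj (Hn n \<rho> y x)) \<and>
        (\<forall>x\<in>V n. \<forall>y\<in>V n. \<not> dE_le S V \<sigma> n x y M \<longrightarrow> Hn n \<rho> x y = 0) \<and>
        (\<forall>w v g. good S V \<sigma> n (4 * M) w \<and> v \<in> ballE S V \<sigma> n w M \<and> g \<in> ballS S M \<and>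
             \<sigma> n g w = v \<longrightarrow> Hn n \<rho> w v = H (Pi_sh \<sigma> n w \<rho>) 0 g) \<and>
        (\<forall>x\<in>V n. \<forall>y\<in>V n. Hn n \<rho> x y \<in> {H \<omega> a b | \<omega> a b. True} \<union> {0})))"

end

theory Submission
  imports Defs "HOL-Library.Function_Algebras" "HOL-Computational_Algebra.Fundamental_Theorem_Algebra"
begin

text \<open>
  Let \<open>r\<close> bound the norms of all operators involved (Schur test; the entries of \<open>H\<close> are
  bounded by compactness of the configuration space) and let \<open>p\<close> be a polynomial with
  \<open>\<bar>p - f\<bar> \<le> \<epsilon>\<close> on \<open>[-r, r]\<close>. For a finite hermitian matrix \<open>A\<close> with \<open>\<parallel>A\<parallel> \<le> r\<close> the
  spectral decomposition \<open>p(A) = (\<Sum>z. p(z) E\<^sub>z(A))\<close>, with the Lagrange interpolation polynomials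
  \<open>E\<^sub>z\<close> at the eigenvalues, bounds every entry of \<open>p(A)\<close> by \<open>sup\<^bsub>[-r,r]\<^esub> \<bar>p\<bar>\<close>. Entries of \<open>p(H)\<close> on
  \<open>G\<close> only involve a finite ball, so on both sides the functional calculus is \<open>\<epsilon>\<close>-close to \<open>p\<close>.

  The entry \<open>p(H\<^sub>n)(v, v)\<close> only involves vertices within distance \<open>deg p \<cdot> M\<close> of \<open>v\<close>. Where
  \<open>\<sigma>\<^sub>n\<close> is multiplicative and free on a large ball around \<open>v\<close>, this neighbourhood is a labelled
  copy of a Cayley ball and \<open>p(H\<^sub>n\<^sup>\<rho>)(v, v) = p(H\<^bsup>\<Pi>\<^sub>v \<rho>\<^esup>)(e, e)\<close> exactly. By soficity the other
  vertices have density tending to \<open>0\<close>, uniformly in \<open>\<rho>\<close>, and each contributes a bounded error.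
\<close>

section \<open>Polynomials in finite matrices\<close>

definition cpolymat :: "'a set \<Rightarrow> ('a \<Rightarrow> 'a \<Rightarrow> complex) \<Rightarrow> complex poly \<Rightarrow> 'a \<Rightarrow> 'a \<Rightarrow> complex" where
  "cpolymat J A p x y = (\<Sum>i\<le>degree p. coeff p i * mpow J A i x y)"

lemma polymat_eq_cpolymat: "polymat J A p x y = cpolymat J A (map_poly complex_of_real p) x y"
  by (simp add: polymat_def cpolymat_def degree_map_poly coeff_map_poly)

lemma mpow_Suc_finite: "finite J \<Longrightarrow> mpow J A (Suc k) x y = (\<Sum>z\<in>J. A x z * mpow J A k z y)"
  by (simp add: mmult_def)

lemma cpolymat_eq_sum:
  "degree p \<le> N \<Longrightarrow> cpolymat J A p x y = (\<Sum>i\<le>N. coeff p i * mpow J A i x y)"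
  unfolding cpolymat_def by (rule sum.mono_neutral_left) (auto simp: coeff_eq_0)

lemma cpolymat_0 [simp]: "cpolymat J A 0 x y = 0"
  by (simp add: cpolymat_def)

lemma cpolymat_add: "cpolymat J A (p + q) x y = cpolymat J A p x y + cpolymat J A q x y"
proof -
  let ?N = "max (degree p) (degree q)"
  have "degree (p + q) \<le> ?N" by (rule degree_add_le) auto
  then show ?thesis
    by (simp add: cpolymat_eq_sum[of _ ?N] sum.distrib algebra_simps)
qed

lemma cpolymat_smult: "cpolymat J A (smult c p) x y = c * cpolymat J A p x y"
  by (simp add: cpolymat_eq_sum[OF degree_smult_le] sum_distrib_left mult.assoc cpolymat_def)

lemma cpolymat_diff: "cpolymat J A (p - q) x y = cpolymat J A p x y - cpolymat J A q x y"
  using cpolymat_add[of J A "p - q" q x y] by simp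

lemma cpolymat_sum: "cpolymat J A (\<Sum>i\<in>I. F i) x y = (\<Sum>i\<in>I. cpolymat J A (F i) x y)"
  by (induction I rule: infinite_finite_induct) (auto simp: cpolymat_add)

lemma cpolymat_1: "cpolymat J A 1 x y = (if x = y then 1 else 0)"
  by (simp add: cpolymat_def)

lemma cpolymat_pCons:
  assumes "finite J"
  shows "cpolymat J A (pCons a p) x y = (if x = y then a else 0) + (\<Sum>z\<in>J. A x z * cpolymat J A p z y)"
proof -
  have "cpolymat J A (pCons a p) x y = (\<Sum>i\<le>Suc (degree p). coeff (pCons a p) i * mpow J A i x y)"
    by (rule cpolymat_eq_sum) (simp add: degree_pCons_le)
  also have "\<dots> = (if x = y then a else 0) + (\<Sum>i\<le>degree p. coeff p i * mpow J A (Suc i) x y)"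
    by (subst sum.atMost_Suc_shift) simp
  also have "(\<Sum>i\<le>degree p. coeff p i * mpow J A (Suc i) x y) = (\<Sum>z\<in>J. A x z * cpolymat J A p z y)"
    unfolding mpow_Suc_finite[OF assms] cpolymat_def sum_distrib_left
    by (subst sum.swap) (simp add: algebra_simps)
  finally show ?thesis .
qed

lemma cpolymat_X: "finite J \<Longrightarrow> y \<in> J \<Longrightarrow> cpolymat J A [:0, 1:] x y = A x y"
  by (simp add: cpolymat_pCons cpolymat_1 if_distrib[of "(*) _"] cong: if_cong)

lemma cpolymat_pCons_mult:
  "finite J \<Longrightarrow> cpolymat J A (pCons a p * q) x y = a * cpolymat J A q x y + (\<Sum>z\<in>J. A x z * cpolymat J A (p * q) z y)"
  by (simp only: mult_pCons_left cpolymat_add cpolymat_smult) (simp add: cpolymat_pCons)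

lemma cpolymat_mult:
  assumes J: "finite J" and x: "x \<in> J"
  shows "cpolymat J A (p * q) x y = (\<Sum>z\<in>J. cpolymat J A p x z * cpolymat J A q z y)"
  using x
proof (induction p arbitrary: x rule: pCons_induct)
  case 0
  then show ?case by simp
next
  case (pCons a p)
  let ?P = "cpolymat J A p" and ?Q = "cpolymat J A q"
  have diag: "a * ?Q x y = (\<Sum>w\<in>J. (if x = w then a else 0) * ?Q w y)"
  proof -
    have "(\<Sum>w\<in>J. (if x = w then a else 0) * ?Q w y) = (\<Sum>w\<in>J. if w = x then a * ?Q w y else 0)"
      by (rule sum.cong) auto
    then show ?thesis using J pCons.prems by simp
  qed
  have "(\<Sum>z\<in>J. A x z * cpolymat J A (p * q) z y) = (\<Sum>z\<in>J. \<Sum>w\<in>J. A x z * ?P z w * ?Q w y)"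
    by (rule sum.cong[OF refl]) (simp add: pCons.IH sum_distrib_left mult.assoc)
  also have "\<dots> = (\<Sum>w\<in>J. (\<Sum>z\<in>J. A x z * ?P z w) * ?Q w y)"
    unfolding sum_distrib_right by (rule sum.swap)
  finally have off_diag: "(\<Sum>z\<in>J. A x z * cpolymat J A (p * q) z y) = (\<Sum>w\<in>J. (\<Sum>z\<in>J. A x z * ?P z w) * ?Q w y)" .
  have "cpolymat J A (pCons a p * q) x y = a * ?Q x y + (\<Sum>z\<in>J. A x z * cpolymat J A (p * q) z y)"
    by (rule cpolymat_pCons_mult[OF J])
  also have "\<dots> = (\<Sum>w\<in>J. ((if x = w then a else 0) + (\<Sum>z\<in>J. A x z * ?P z w)) * ?Q w y)"
    unfolding diag off_diag distrib_right sum.distrib ..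
  also have "\<dots> = (\<Sum>w\<in>J. cpolymat J A (pCons a p) x w * ?Q w y)"
    unfolding cpolymat_pCons[OF J] ..
  finally show ?case .
qed

definition hermitian_on :: "'a set \<Rightarrow> ('a \<Rightarrow> 'a \<Rightarrow> complex) \<Rightarrow> bool" where
  "hermitian_on J A \<longleftrightarrow> (\<forall>x\<in>J. \<forall>y\<in>J. A x y = cnj (A y x))"

lemma hermitian_onD: "hermitian_on J A \<Longrightarrow> x \<in> J \<Longrightarrow> y \<in> J \<Longrightarrow> A x y = cnj (A y x)"
  unfolding hermitian_on_def by blast

lemma hermitian_on_cpolymat:
  assumes J: "finite J" and A: "hermitian_on J A" and real: "\<forall>i. coeff p i \<in> \<real>"
  shows "hermitian_on J (cpolymat J A p)"
  using real
proof (induction p rule: pCons_induct)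
  case 0
  then show ?case by (simp add: hermitian_on_def)
next
  case (pCons a p)
  have a: "cnj a = a" using pCons.prems[rule_format, of 0] by (simp add: Reals_cnj_iff)
  have "\<forall>i. coeff p i \<in> \<real>" using pCons.prems[rule_format, of "Suc _"] by simp
  then have P: "hermitian_on J (cpolymat J A p)" by (rule pCons.IH)
  show ?case unfolding hermitian_on_def
  proof (intro ballI)
    fix x y assume x: "x \<in> J" and y: "y \<in> J"
    \<comment> \<open>the adjoint of \<open>A p(A)\<close> is \<open>p(A) A\<close>, and polynomials in \<open>A\<close> commute\<close>
    have "(\<Sum>z\<in>J. cpolymat J A p x z * A z y) = cpolymat J A (p * [:0, 1:]) x y"
      unfolding cpolymat_mult[OF J x] by (rule sum.cong) (simp_all add: cpolymat_X[OF J y])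
    also have "\<dots> = (\<Sum>z\<in>J. A x z * cpolymat J A p z y)"
      unfolding mult.commute[of p] cpolymat_mult[OF J x] by (rule sum.cong) (simp_all add: cpolymat_X[OF J])
    finally have comm: "(\<Sum>z\<in>J. cpolymat J A p x z * A z y) = (\<Sum>z\<in>J. A x z * cpolymat J A p z y)" .
    have "cnj (A y z * cpolymat J A p z x) = cpolymat J A p x z * A z y" if "z \<in> J" for z
      using hermitian_onD[OF A y that] hermitian_onD[OF P x that] by simp
    then have "cnj (cpolymat J A (pCons a p) y x) = (if x = y then a else 0) + (\<Sum>z\<in>J. cpolymat J A p x z * A z y)"
      using a by (simp add: cpolymat_pCons[OF J])
    also have "\<dots> = cpolymat J A (pCons a p) x y"
      by (simp only: comm cpolymat_pCons[OF J])
    finally show "cpolymat J A (pCons a p) x y = cnj (cpolymat J A (pCons a p) y x)" by simp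
  qed
qed

section \<open>Entries of polynomials in hermitian matrices\<close>

lemma mvec_finite: "finite J \<Longrightarrow> mvec J A v x = (\<Sum>y\<in>J. A x y * v y)"
  by (simp add: mvec_def)

definition eigenvalues :: "'a set \<Rightarrow> ('a \<Rightarrow> 'a \<Rightarrow> complex) \<Rightarrow> complex set" where
  "eigenvalues J A = {z. \<exists>w. (\<exists>x\<in>J. w x \<noteq> 0) \<and> (\<forall>x\<in>J. mvec J A w x = z * w x)}"

definition op_norm_le :: "'a set \<Rightarrow> ('a \<Rightarrow> 'a \<Rightarrow> complex) \<Rightarrow> real \<Rightarrow> bool" where
  "op_norm_le J A r \<longleftrightarrow> (\<forall>u. (\<Sum>x\<in>J. (cmod (mvec J A u x))\<^sup>2) \<le> r\<^sup>2 * (\<Sum>x\<in>J. (cmod (u x))\<^sup>2))"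

definition annihilates :: "complex poly \<Rightarrow> 'a set \<Rightarrow> ('a \<Rightarrow> 'a \<Rightarrow> complex) \<Rightarrow> bool" where
  "annihilates P J A \<longleftrightarrow> (\<forall>x\<in>J. \<forall>y\<in>J. cpolymat J A P x y = 0)"

lemma annihilates_dvd:
  assumes J: "finite J" and Q: "annihilates Q J A" and "Q dvd P"
  shows "annihilates P J A"
proof -
  obtain R where P: "P = Q * R" using \<open>Q dvd P\<close> by blast
  show ?thesis
    using Q by (simp add: annihilates_def P cpolymat_mult[OF J])
qed

lemma annihilates_diff_imp_eq:
  "annihilates (P - Q) J A \<Longrightarrow> x \<in> J \<Longrightarrow> y \<in> J \<Longrightarrow> cpolymat J A P x y = cpolymat J A Q x y"
  by (simp add: annihilates_def cpolymat_diff)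

lemma sum_cnj_mult_self: "(\<Sum>x\<in>J. cnj (u x) * u x) = complex_of_real (\<Sum>x\<in>J. (cmod (u x))\<^sup>2)"
proof -
  have "cnj a * a = complex_of_real ((cmod a)\<^sup>2)" for a
    by (metis complex_norm_square mult.commute)
  then show ?thesis by (simp only: of_real_sum)
qed

lemma sum_norm_sq_pos:
  assumes "finite J" "x \<in> J" "u x \<noteq> 0"
  shows "(\<Sum>x\<in>J. (cmod (u x))\<^sup>2) > 0"
proof -
  have "0 < (cmod (u x))\<^sup>2" using assms(3) by simp
  also have "\<dots> \<le> (\<Sum>x\<in>J. (cmod (u x))\<^sup>2)" using assms(1,2) by (intro member_le_sum) auto
  finally show ?thesis .
qed

lemma hermitian_on_sum_swap:
  assumes "finite J" "hermitian_on J A"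
  shows "(\<Sum>x\<in>J. cnj (u x) * (\<Sum>w\<in>J. A x w * v w)) = (\<Sum>w\<in>J. v w * cnj (\<Sum>x\<in>J. A w x * u x))"
proof -
  have "(\<Sum>x\<in>J. cnj (u x) * (\<Sum>w\<in>J. A x w * v w)) = (\<Sum>w\<in>J. \<Sum>x\<in>J. cnj (u x) * A x w * v w)"
    by (subst sum.swap) (simp add: sum_distrib_left mult.assoc)
  also have "\<dots> = (\<Sum>w\<in>J. \<Sum>x\<in>J. v w * cnj (A w x * u x))"
  proof (intro sum.cong refl)
    fix w x assume "w \<in> J" "x \<in> J"
    then show "cnj (u x) * A x w * v w = v w * cnj (A w x * u x)"
      using hermitian_onD[OF assms(2), of x w] by (simp add: mult_ac)
  qed
  finally show ?thesis by (simp add: sum_distrib_left)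
qed

lemma cpolymat_linear_factor:
  "finite J \<Longrightarrow> cpolymat J A ([:-z, 1:] * Q) x y = (\<Sum>w\<in>J. A x w * cpolymat J A Q w y) - z * cpolymat J A Q x y"
  by (simp only: cpolymat_pCons_mult) (simp add: cpolymat_pCons cpolymat_smult)

text \<open>If \<open>(A - z) Q(A) = 0\<close>, every nonzero column of \<open>Q(A)\<close> is an eigenvector for \<open>z\<close>.\<close>
lemma annihilates_cancel_non_eigenvalue:
  assumes J: "finite J" and z: "z \<notin> eigenvalues J A" and ann: "annihilates ([:-z, 1:] * Q) J A"
  shows "annihilates Q J A"
  unfolding annihilates_def
proof (intro ballI)
  fix x y assume x: "x \<in> J" and y: "y \<in> J"
  have eig: "mvec J A (\<lambda>u. cpolymat J A Q u y) u = z * cpolymat J A Q u y" if u: "u \<in> J" for u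
    using ann[unfolded annihilates_def, rule_format, OF u y] cpolymat_linear_factor[OF J, of A z Q u y]
    by (simp add: mvec_finite[OF J])
  show "cpolymat J A Q x y = 0"
  proof (rule ccontr)
    assume "cpolymat J A Q x y \<noteq> 0"
    then have "z \<in> eigenvalues J A"
      unfolding eigenvalues_def using x eig by (intro CollectI exI[of _ "\<lambda>u. cpolymat J A Q u y"]) auto
    with z show False ..
  qed
qed

lemma annihilates_cancel_square:
  assumes J: "finite J" and A: "hermitian_on J A" and z: "z \<in> \<real>"
    and ann: "annihilates ([:-z, 1:] * ([:-z, 1:] * Q)) J A"
  shows "annihilates ([:-z, 1:] * Q) J A"
  unfolding annihilates_def
proof (intro ballI)
  fix x y assume x: "x \<in> J" and y: "y \<in> J"
  let ?v = "\<lambda>u. cpolymat J A Q u y"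
  let ?u = "\<lambda>u. cpolymat J A ([:-z, 1:] * Q) u y"
  have u: "?u a = (\<Sum>w\<in>J. A a w * ?v w) - z * ?v a" for a
    by (rule cpolymat_linear_factor[OF J])
  have Au: "(\<Sum>w\<in>J. A a w * ?u w) - z * ?u a = 0" if "a \<in> J" for a
    using ann that y by (simp add: annihilates_def cpolymat_linear_factor[OF J, symmetric])
  have cz: "cnj z = z" using z by (simp add: Reals_cnj_iff)
  \<comment> \<open>\<open>\<parallel>u\<parallel>\<^sup>2 = \<langle>u, (A - z) v\<rangle> = \<langle>(A - z) u, v\<rangle> = 0\<close>\<close>
  have "(\<Sum>a\<in>J. cnj (?u a) * ?u a) = (\<Sum>a\<in>J. cnj (?u a) * (\<Sum>w\<in>J. A a w * ?v w)) - (\<Sum>a\<in>J. cnj (?u a) * (z * ?v a))"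
    by (simp only: u right_diff_distrib sum_subtractf)
  also have "\<dots> = (\<Sum>w\<in>J. ?v w * cnj (\<Sum>a\<in>J. A w a * ?u a)) - (\<Sum>w\<in>J. ?v w * cnj (z * ?u w))"
    by (simp only: hermitian_on_sum_swap[OF J A]) (simp add: cz mult_ac)
  also have "\<dots> = (\<Sum>w\<in>J. ?v w * cnj ((\<Sum>a\<in>J. A w a * ?u a) - z * ?u w))"
    by (simp add: sum_subtractf right_diff_distrib)
  also have "\<dots> = 0"
    using Au by (intro sum.neutral) simp
  finally have "(\<Sum>a\<in>J. (cmod (?u a))\<^sup>2) = 0"
    by (simp only: sum_cnj_mult_self of_real_eq_0_iff)
  with sum_norm_sq_pos[OF J x, where u = ?u] show "cpolymat J A ([:-z, 1:] * Q) x y = 0"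
    by fastforce
qed

lemma eigenvalue_hermitian_real:
  assumes J: "finite J" and A: "hermitian_on J A" and z: "z \<in> eigenvalues J A"
  shows "z \<in> \<real>"
proof -
  obtain w x0 where x0: "x0 \<in> J" "w x0 \<noteq> 0" and ev: "\<forall>x\<in>J. (\<Sum>y\<in>J. A x y * w y) = z * w x"
    using z unfolding eigenvalues_def mvec_finite[OF J] by blast
  define n where "n = (\<Sum>x\<in>J. (cmod (w x))\<^sup>2)"
  have n: "n > 0" unfolding n_def using J x0 by (rule sum_norm_sq_pos[where u = w])
  let ?s = "\<Sum>x\<in>J. cnj (w x) * (\<Sum>y\<in>J. A x y * w y)"
  have "?s = (\<Sum>x\<in>J. z * (cnj (w x) * w x))"
    using ev by (intro sum.cong) (simp_all add: mult_ac)
  also have "\<dots> = z * complex_of_real n"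
    by (simp only: sum_distrib_left[symmetric] n_def sum_cnj_mult_self)
  finally have "?s = z * complex_of_real n" .
  moreover have "cnj ?s = ?s"
    by (subst (2) hermitian_on_sum_swap[OF J A]) (simp add: mult.commute)
  ultimately have "cnj z * complex_of_real n = z * complex_of_real n"
    by (metis complex_cnj_complex_of_real complex_cnj_mult)
  then have "cnj z = z" using n by simp
  then show ?thesis by (simp add: Reals_cnj_iff)
qed

lemma eigenvalue_norm_le:
  assumes J: "finite J" and A: "op_norm_le J A r" and r: "r \<ge> 0" and z: "z \<in> eigenvalues J A"
  shows "cmod z \<le> r"
proof -
  obtain w x0 where x0: "x0 \<in> J" "w x0 \<noteq> 0" and ev: "\<forall>x\<in>J. mvec J A w x = z * w x"
    using z unfolding eigenvalues_def by blast
  define n where "n = (\<Sum>x\<in>J. (cmod (w x))\<^sup>2)"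
  have n: "n > 0" unfolding n_def using J x0 by (rule sum_norm_sq_pos[where u = w])
  have "(cmod z)\<^sup>2 * n = (\<Sum>x\<in>J. (cmod (mvec J A w x))\<^sup>2)"
    unfolding n_def sum_distrib_left using ev by (intro sum.cong) (auto simp: norm_mult power_mult_distrib)
  also have "\<dots> \<le> r\<^sup>2 * n"
    using A unfolding op_norm_le_def n_def by blast
  finally have "(cmod z)\<^sup>2 \<le> r\<^sup>2" using n by simp
  then show ?thesis using r by (simp add: power2_le_iff_abs_le)
qed

lemma sum_fun_apply: "(\<Sum>i\<in>I. f i) x = (\<Sum>i\<in>I. f i x)"
  by (induction I rule: infinite_finite_induct) auto

lemma exists_linear_relation_of_inj:
  fixes F :: "nat \<Rightarrow> 'b \<Rightarrow> complex"
  assumes D: "finite D" and supp: "\<And>k q. q \<notin> D \<Longrightarrow> F k q = 0" and N: "card D \<le> N"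
    and inj: "inj_on F {..N}"
  shows "\<exists>c. (\<exists>k\<le>N. c k \<noteq> 0) \<and> (\<forall>q. (\<Sum>k\<le>N. c k * F k q) = 0)"
proof -
  interpret V: vector_space "\<lambda>(c::complex) (f::'b \<Rightarrow> complex). (\<lambda>q. c * f q)"
    by unfold_locales (auto simp: fun_eq_iff algebra_simps)
  define e where "e q0 = (\<lambda>q. if q = q0 then 1 else 0 :: complex)" for q0 :: 'b
  have span: "F ` {..N} \<subseteq> V.span (e ` D)"
  proof
    fix f assume "f \<in> F ` {..N}"
    then obtain k where f: "f = F k" by blast
    have "f = (\<Sum>q0\<in>D. (\<lambda>q. f q0 * e q0 q))"
    proof
      fix q
      have "(\<Sum>q0\<in>D. (\<lambda>q. f q0 * e q0 q)) q = (\<Sum>q0\<in>D. if q0 = q then f q0 else 0)"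
        unfolding sum_fun_apply e_def by (rule sum.cong) auto
      also have "\<dots> = f q" using D supp f by auto
      finally show "f q = (\<Sum>q0\<in>D. (\<lambda>q. f q0 * e q0 q)) q" ..
    qed
    also have "\<dots> \<in> V.span (e ` D)"
      by (intro V.span_sum V.span_scale V.span_base) auto
    finally show "f \<in> V.span (e ` D)" .
  qed
  have "\<not> V.independent (F ` {..N})"
  proof
    assume "V.independent (F ` {..N})"
    from V.independent_span_bound[OF _ this span] D inj N card_image_le[OF D, of e]
    show False by (simp add: card_image)
  qed
  then obtain u where u: "\<exists>v\<in>F ` {..N}. u v \<noteq> 0" "(\<Sum>v\<in>F ` {..N}. (\<lambda>q. u v * v q)) = 0"
    using V.dependent_finite[of "F ` {..N}"] by auto
  have "(\<Sum>k\<le>N. u (F k) * F k q) = (\<Sum>v\<in>F ` {..N}. (\<lambda>q. u v * v q)) q" for q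
    using inj by (simp add: sum_fun_apply sum.reindex)
  with u show ?thesis by (intro exI[of _ "\<lambda>k. u (F k)"]) auto
qed

lemma exists_nontrivial_linear_relation:
  fixes F :: "nat \<Rightarrow> 'b \<Rightarrow> complex"
  assumes "finite D" and "\<And>k q. q \<notin> D \<Longrightarrow> F k q = 0" and "card D \<le> N"
  shows "\<exists>c. (\<exists>k\<le>N. c k \<noteq> 0) \<and> (\<forall>q. (\<Sum>k\<le>N. c k * F k q) = 0)"
proof (cases "inj_on F {..N}")
  case False
  then obtain i j where ij: "i \<le> N" "j \<le> N" "i \<noteq> j" "F i = F j"
    by (auto simp: inj_on_def)
  define c where "c k = (if k = i then 1 else if k = j then -1 else 0 :: complex)" for k
  have "(\<Sum>k\<le>N. c k * F k q) = (\<Sum>k\<in>{i, j}. c k * F k q)" for q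
    using ij by (intro sum.mono_neutral_right) (auto simp: c_def)
  then show ?thesis using ij by (intro exI[of _ c]) (auto simp: c_def)
qed (rule exists_linear_relation_of_inj[OF assms])

lemma exists_annihilating_poly:
  assumes J: "finite J"
  shows "\<exists>m. m \<noteq> 0 \<and> annihilates m J A"
proof -
  define N where "N = card (J \<times> J)"
  define F where "F k = (\<lambda>(x, y). if x \<in> J \<and> y \<in> J then mpow J A k x y else 0)" for k
  have "\<exists>c. (\<exists>k\<le>N. c k \<noteq> 0) \<and> (\<forall>q. (\<Sum>k\<le>N. c k * F k q) = 0)"
    by (rule exists_nontrivial_linear_relation[of "J \<times> J"]) (use J in \<open>auto simp: F_def N_def split: if_splits\<close>)
  then obtain c where c: "\<exists>k\<le>N. c k \<noteq> 0" "\<And>q. (\<Sum>k\<le>N. c k * F k q) = 0"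
    by blast
  define m where "m = (\<Sum>k\<le>N. monom (c k) k)"
  have coeff_m: "coeff m k = (if k \<le> N then c k else 0)" for k
    by (simp add: m_def coeff_sum coeff_monom)
  have "m \<noteq> 0"
    using c(1) coeff_m by (metis coeff_0)
  moreover have "annihilates m J A"
    unfolding annihilates_def
  proof (intro ballI)
    fix x y assume "x \<in> J" "y \<in> J"
    have "degree m \<le> N" by (rule degree_le) (simp add: coeff_m)
    then have "cpolymat J A m x y = (\<Sum>k\<le>N. c k * F k (x, y))"
      using \<open>x \<in> J\<close> \<open>y \<in> J\<close> by (simp add: cpolymat_eq_sum coeff_m F_def)
    then show "cpolymat J A m x y = 0" using c(2) by simp
  qed
  ultimately show ?thesis by blast
qed

definition vanishing_poly :: "'a::comm_ring_1 set \<Rightarrow> 'a poly" where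
  "vanishing_poly Z = (\<Prod>z\<in>Z. [:-z, 1:])"

lemma poly_vanishing_poly: "poly (vanishing_poly Z) x = (\<Prod>z\<in>Z. x - z)"
  by (simp add: vanishing_poly_def poly_prod)

lemma vanishing_poly_remove: "finite Z \<Longrightarrow> z \<in> Z \<Longrightarrow> vanishing_poly Z = [:-z, 1:] * vanishing_poly (Z - {z})"
  unfolding vanishing_poly_def by (simp add: prod.remove)

lemma degree_vanishing_poly_le: "finite Z \<Longrightarrow> degree (vanishing_poly (Z :: 'a::idom set)) \<le> card Z"
  unfolding vanishing_poly_def using degree_prod_sum_le[of Z "\<lambda>z. [:-z, 1:]"] by simp

lemma annihilates_insert_eigenvalue:
  assumes J: "finite J" and A: "hermitian_on J A" and Z: "finite Z" and z: "z \<in> eigenvalues J A"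
    and ann: "annihilates ([:-z, 1:] * (vanishing_poly Z * R)) J A"
  shows "annihilates (vanishing_poly (insert z Z) * R) J A"
proof (cases "z \<in> Z")
  case False
  have "[:-z, 1:] * (vanishing_poly Z * R) = vanishing_poly (insert z Z) * R"
    by (simp only: vanishing_poly_def prod.insert[OF Z False] mult.assoc)
  with ann show ?thesis by (simp only:)
next
  case True
  \<comment> \<open>a repeated root of an annihilating polynomial of a hermitian matrix can be dropped\<close>
  have V: "vanishing_poly Z = [:-z, 1:] * vanishing_poly (Z - {z})"
    using Z True by (rule vanishing_poly_remove)
  have "annihilates ([:-z, 1:] * ([:-z, 1:] * (vanishing_poly (Z - {z}) * R))) J A"
    using ann by (simp only: V mult.assoc)
  then have "annihilates ([:-z, 1:] * (vanishing_poly (Z - {z}) * R)) J A"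
    by (rule annihilates_cancel_square[OF J A eigenvalue_hermitian_real[OF J A z]])
  then show ?thesis
    using True by (simp only: V insert_absorb mult.assoc)
qed

lemma annihilates_vanishing_poly_reduce:
  assumes J: "finite J" and A: "hermitian_on J A"
  shows "finite Z \<Longrightarrow> Z \<subseteq> eigenvalues J A \<Longrightarrow> annihilates (vanishing_poly Z * (\<Prod>z\<in>#M. [:-z, 1:])) J A
     \<Longrightarrow> \<exists>Z'. finite Z' \<and> Z' \<subseteq> eigenvalues J A \<and> annihilates (vanishing_poly Z') J A"
proof (induction M arbitrary: Z)
  case empty
  then show ?case by auto
next
  case (add z M)
  let ?R = "\<Prod>z\<in>#M. [:-z, 1:]"
  have "vanishing_poly Z * (\<Prod>z\<in>#add_mset z M. [:-z, 1:]) = [:-z, 1:] * (vanishing_poly Z * ?R)"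
    by (simp only: image_mset_add_mset prod_mset.add_mset mult_ac)
  then have ann: "annihilates ([:-z, 1:] * (vanishing_poly Z * ?R)) J A"
    using add.prems(3) by (simp only:)
  show ?case
  proof (cases "z \<in> eigenvalues J A")
    case False
    have "annihilates (vanishing_poly Z * ?R) J A"
      by (rule annihilates_cancel_non_eigenvalue[OF J False ann])
    then show ?thesis using add.IH add.prems(1,2) by blast
  next
    case True
    have "annihilates (vanishing_poly (insert z Z) * ?R) J A"
      by (rule annihilates_insert_eigenvalue[OF J A add.prems(1) True ann])
    then show ?thesis using add.IH[of "insert z Z"] add.prems(1,2) True by blast
  qed
qed

lemma exists_annihilating_vanishing_poly:
  assumes J: "finite J" and A: "hermitian_on J A"
  shows "\<exists>Z. finite Z \<and> Z \<subseteq> eigenvalues J A \<and> annihilates (vanishing_poly Z) J A"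
proof -
  obtain m where m: "m \<noteq> 0" "annihilates m J A"
    using exists_annihilating_poly[OF J] by blast
  define P where "P = (\<Prod>z\<in>#proots m. [:-z, 1:])"
  have mP: "m = smult (lead_coeff m) P"
    unfolding P_def by (rule complex_poly_decompose_multiset[symmetric])
  have "annihilates P J A"
    unfolding annihilates_def
  proof (intro ballI)
    fix x y assume "x \<in> J" "y \<in> J"
    have "lead_coeff m * cpolymat J A P x y = cpolymat J A m x y"
      by (subst (2) mP) (rule cpolymat_smult[symmetric])
    also have "\<dots> = 0"
      using m(2) \<open>x \<in> J\<close> \<open>y \<in> J\<close> unfolding annihilates_def by blast
    finally show "cpolymat J A P x y = 0" using m(1) by simp
  qed
  then have "annihilates (vanishing_poly {} * P) J A"
    by (simp add: vanishing_poly_def)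
  from annihilates_vanishing_poly_reduce[OF J A _ _ this[unfolded P_def]] show ?thesis
    by simp
qed

definition lagrange_basis :: "'a::field set \<Rightarrow> 'a \<Rightarrow> 'a poly" where
  "lagrange_basis Z z = smult (\<Prod>w\<in>Z - {z}. inverse (z - w)) (vanishing_poly (Z - {z}))"

lemma poly_lagrange_basis:
  assumes "finite Z" "z \<in> Z" "z' \<in> Z"
  shows "poly (lagrange_basis Z z) z' = (if z' = z then 1 else 0)"
proof (cases "z' = z")
  case True
  have "poly (lagrange_basis Z z) z' = (\<Prod>w\<in>Z - {z}. inverse (z - w) * (z - w))"
    using True by (simp add: lagrange_basis_def poly_vanishing_poly prod.distrib)
  also have "\<dots> = 1" by (intro prod.neutral ballI left_inverse) auto
  finally show ?thesis using True by simp
next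
  case False
  then show ?thesis
    using assms by (simp add: lagrange_basis_def poly_vanishing_poly prod_zero_iff)
qed

lemma degree_lagrange_basis_less:
  assumes "finite Z" "z \<in> Z"
  shows "degree (lagrange_basis Z z) < card Z"
proof -
  have "degree (lagrange_basis Z z) \<le> card (Z - {z})"
    unfolding lagrange_basis_def using assms
    by (intro order_trans[OF degree_smult_le degree_vanishing_poly_le]) simp
  also have "\<dots> < card Z" by (rule card_Diff1_less[OF assms])
  finally show ?thesis .
qed

lemma vanishing_poly_dvd_sum_lagrange_basis:
  assumes Z: "finite Z"
  shows "vanishing_poly Z dvd (\<Sum>z\<in>Z. lagrange_basis Z z) - 1"
proof (cases "Z = {}")
  case True
  then show ?thesis by (simp add: vanishing_poly_def)
next
  case False
  \<comment> \<open>the difference has degree below \<open>card Z\<close> and vanishes on \<open>Z\<close>\<close>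
  let ?q = "(\<Sum>z\<in>Z. lagrange_basis Z z) - 1"
  have "?q = 0"
  proof (rule ccontr)
    assume q: "?q \<noteq> 0"
    have "degree (\<Sum>z\<in>Z. lagrange_basis Z z) \<le> card Z - 1"
    proof (rule degree_sum_le[OF Z])
      fix z assume "z \<in> Z"
      from degree_lagrange_basis_less[OF Z this] show "degree (lagrange_basis Z z) \<le> card Z - 1"
        by linarith
    qed
    then have "degree ?q \<le> card Z - 1"
      by (intro degree_diff_le) simp_all
    moreover have "poly ?q z' = 0" if z': "z' \<in> Z" for z'
    proof -
      have "poly (\<Sum>z\<in>Z. lagrange_basis Z z) z' = (\<Sum>z\<in>Z. if z' = z then 1 else 0)"
        unfolding poly_sum by (rule sum.cong[OF refl]) (rule poly_lagrange_basis[OF Z _ z'])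
      also have "\<dots> = 1" using Z z' by simp
      finally show ?thesis by simp
    qed
    then have "Z \<subseteq> {x. poly ?q x = 0}" by blast
    then have "card Z \<le> card {x. poly ?q x = 0}"
      by (intro card_mono poly_roots_finite q)
    moreover have "card {x. poly ?q x = 0} \<le> degree ?q"
      by (rule card_poly_roots_bound[OF q])
    moreover have "card Z > 0" using False Z by (simp add: card_gt_0_iff)
    ultimately show False by linarith
  qed
  then show ?thesis by simp
qed

lemma vanishing_poly_dvd_lagrange_basis_mult:
  assumes "finite Z" "z \<in> Z" "z' \<in> Z" "z \<noteq> z'"
  shows "vanishing_poly Z dvd lagrange_basis Z z * lagrange_basis Z z'"
proof -
  have "[:-z, 1:] dvd vanishing_poly (Z - {z'})"
    unfolding vanishing_poly_def using assms by (intro dvd_prodI) auto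
  then have "vanishing_poly Z dvd vanishing_poly (Z - {z'}) * vanishing_poly (Z - {z})"
    unfolding vanishing_poly_remove[OF assms(1,2)] by (rule mult_dvd_mono[OF _ dvd_refl])
  then have "vanishing_poly Z dvd vanishing_poly (Z - {z}) * vanishing_poly (Z - {z'})"
    by (simp only: mult.commute)
  then show ?thesis unfolding lagrange_basis_def by (simp add: dvd_smult)
qed

lemma vanishing_poly_dvd_lagrange_remainder:
  assumes "finite Z" "z \<in> Z"
  shows "vanishing_poly Z dvd (p - [:poly p z:]) * lagrange_basis Z z"
proof -
  have "[:-z, 1:] dvd p - [:poly p z:]"
    by (simp add: poly_eq_0_iff_dvd[symmetric])
  then have "[:-z, 1:] * vanishing_poly (Z - {z}) dvd (p - [:poly p z:]) * vanishing_poly (Z - {z})"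
    by (rule mult_dvd_mono) simp
  then show ?thesis unfolding lagrange_basis_def vanishing_poly_remove[OF assms]
    by (simp add: dvd_smult)
qed

lemma coeff_mult_in_Reals:
  "(\<And>i. coeff p i \<in> \<real>) \<Longrightarrow> (\<And>i. coeff q i \<in> \<real>) \<Longrightarrow> coeff (p * q) i \<in> \<real>"
  unfolding coeff_mult by (auto intro!: sum_in_Reals Reals_mult)

lemma coeff_prod_in_Reals:
  "(\<And>z i. z \<in> I \<Longrightarrow> coeff (F z) i \<in> \<real>) \<Longrightarrow> coeff (\<Prod>z\<in>I. F z) i \<in> \<real>"
proof (induction I arbitrary: i rule: infinite_finite_induct)
  case (insert z I)
  then show ?case by (simp add: coeff_mult_in_Reals)
qed (auto simp: coeff_1)

lemma coeff_lagrange_basis_in_Reals: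
  fixes Z :: "complex set"
  assumes "Z \<subseteq> \<real>" "z \<in> Z"
  shows "coeff (lagrange_basis Z z) i \<in> \<real>"
proof -
  have "coeff (vanishing_poly (Z - {z})) i \<in> \<real>" for i
    unfolding vanishing_poly_def using assms(1)
    by (intro coeff_prod_in_Reals) (auto simp: coeff_pCons split: nat.splits)
  moreover have "(\<Prod>w\<in>Z - {z}. inverse (z - w)) \<in> \<real>"
    using assms by (intro prod_in_Reals) (auto intro!: Reals_diff)
  ultimately show ?thesis
    unfolding lagrange_basis_def by (simp add: Reals_mult)
qed

context
  fixes J :: "'a set" and A :: "'a \<Rightarrow> 'a \<Rightarrow> complex" and Z :: "complex set"
  assumes J: "finite J" and Z: "finite Z" and ann: "annihilates (vanishing_poly Z) J A"
begin

lemma cpolymat_spectral_decomposition: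
  assumes "x \<in> J" "y \<in> J"
  shows "cpolymat J A p x y = (\<Sum>z\<in>Z. poly p z * cpolymat J A (lagrange_basis Z z) x y)"
proof -
  define L where "L = (\<Sum>z\<in>Z. lagrange_basis Z z)"
  define S where "S = (\<Sum>z\<in>Z. smult (poly p z) (lagrange_basis Z z))"
  define R where "R = (\<Sum>z\<in>Z. (p - [:poly p z:]) * lagrange_basis Z z)"
  have "R = p * L - S"
    by (simp add: R_def L_def S_def left_diff_distrib sum_subtractf sum_distrib_left)
  then have "p - S = R - p * (L - 1)"
    by (simp add: right_diff_distrib)
  moreover have "vanishing_poly Z dvd R - p * (L - 1)"
  proof (rule dvd_diff)
    show "vanishing_poly Z dvd R"
      unfolding R_def by (rule dvd_sum) (rule vanishing_poly_dvd_lagrange_remainder[OF Z])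
    show "vanishing_poly Z dvd p * (L - 1)"
      unfolding L_def by (rule dvd_mult) (rule vanishing_poly_dvd_sum_lagrange_basis[OF Z])
  qed
  ultimately have "annihilates (p - S) J A"
    using annihilates_dvd[OF J ann] by simp
  from annihilates_diff_imp_eq[OF this assms] show ?thesis
    by (simp add: S_def cpolymat_sum cpolymat_smult)
qed

lemma spectral_projections_sum_diag:
  assumes "a \<in> J"
  shows "(\<Sum>z\<in>Z. cpolymat J A (lagrange_basis Z z) a a) = 1"
proof -
  have "annihilates ((\<Sum>z\<in>Z. lagrange_basis Z z) - 1) J A"
    by (rule annihilates_dvd[OF J ann vanishing_poly_dvd_sum_lagrange_basis[OF Z]])
  from annihilates_diff_imp_eq[OF this assms assms] show ?thesis
    by (simp add: cpolymat_sum cpolymat_1)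
qed

lemma spectral_projection_gram:
  assumes A: "hermitian_on J A" and real: "Z \<subseteq> \<real>" and z: "z \<in> Z" and a: "a \<in> J" and b: "b \<in> J"
  shows "cpolymat J A (lagrange_basis Z z) a b =
    (\<Sum>w\<in>J. cnj (cpolymat J A (lagrange_basis Z z) w a) * cpolymat J A (lagrange_basis Z z) w b)"
proof -
  let ?E = "lagrange_basis Z z"
  \<comment> \<open>\<open>E\<^sub>z\<close> is idempotent modulo the vanishing polynomial, and hermitian\<close>
  define L where "L = (\<Sum>z'\<in>Z. lagrange_basis Z z')"
  define R where "R = (\<Sum>z'\<in>Z - {z}. ?E * lagrange_basis Z z')"
  have "?E * L = ?E * ?E + R"
    by (simp add: L_def R_def sum.remove[OF Z z] sum_distrib_left distrib_left)
  then have "?E - ?E * ?E = R - ?E * (L - 1)"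
    by (simp add: right_diff_distrib)
  moreover have "vanishing_poly Z dvd R - ?E * (L - 1)"
  proof (rule dvd_diff)
    show "vanishing_poly Z dvd R"
      unfolding R_def by (rule dvd_sum) (use vanishing_poly_dvd_lagrange_basis_mult[OF Z z] in blast)
    show "vanishing_poly Z dvd ?E * (L - 1)"
      unfolding L_def by (rule dvd_mult) (rule vanishing_poly_dvd_sum_lagrange_basis[OF Z])
  qed
  ultimately have "annihilates (?E - ?E * ?E) J A"
    using annihilates_dvd[OF J ann] by simp
  from annihilates_diff_imp_eq[OF this a b]
  have "cpolymat J A ?E a b = (\<Sum>w\<in>J. cpolymat J A ?E a w * cpolymat J A ?E w b)"
    by (simp add: cpolymat_mult[OF J a])
  also have "\<dots> = (\<Sum>w\<in>J. cnj (cpolymat J A ?E w a) * cpolymat J A ?E w b)"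
  proof (rule sum.cong[OF refl])
    fix w assume "w \<in> J"
    have "hermitian_on J (cpolymat J A ?E)"
      using coeff_lagrange_basis_in_Reals[OF real z] by (intro hermitian_on_cpolymat[OF J A]) auto
    from hermitian_onD[OF this a \<open>w \<in> J\<close>]
    show "cpolymat J A ?E a w * cpolymat J A ?E w b = cnj (cpolymat J A ?E w a) * cpolymat J A ?E w b"
      by simp
  qed
  finally show ?thesis .
qed


lemma spectral_projection_norm_le:
  assumes "hermitian_on J A" "Z \<subseteq> \<real>" "z \<in> Z" "a \<in> J" "b \<in> J"
  shows "cmod (cpolymat J A (lagrange_basis Z z) a b) \<le>
    L2_set (\<lambda>w. cmod (cpolymat J A (lagrange_basis Z z) w a)) J * L2_set (\<lambda>w. cmod (cpolymat J A (lagrange_basis Z z) w b)) J"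
proof -
  have "cmod (cpolymat J A (lagrange_basis Z z) a b) \<le>
      (\<Sum>w\<in>J. \<bar>cmod (cpolymat J A (lagrange_basis Z z) w a)\<bar> * \<bar>cmod (cpolymat J A (lagrange_basis Z z) w b)\<bar>)"
    using spectral_projection_gram[OF assms] by (simp add: norm_mult order_trans[OF norm_sum])
  also have "\<dots> \<le> L2_set (\<lambda>w. cmod (cpolymat J A (lagrange_basis Z z) w a)) J * L2_set (\<lambda>w. cmod (cpolymat J A (lagrange_basis Z z) w b)) J"
    by (rule L2_set_mult_ineq)
  finally show ?thesis .
qed

lemma L2_set_spectral_projections:
  assumes A: "hermitian_on J A" and real: "Z \<subseteq> \<real>" and a: "a \<in> J"
  shows "L2_set (\<lambda>z. L2_set (\<lambda>w. cmod (cpolymat J A (lagrange_basis Z z) w a)) J) Z = 1"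
proof -
  have "(L2_set (\<lambda>w. cmod (cpolymat J A (lagrange_basis Z z) w a)) J)\<^sup>2 = Re (cpolymat J A (lagrange_basis Z z) a a)"
    if z: "z \<in> Z" for z
  proof -
    have "cpolymat J A (lagrange_basis Z z) a a = complex_of_real (\<Sum>w\<in>J. (cmod (cpolymat J A (lagrange_basis Z z) w a))\<^sup>2)"
      using spectral_projection_gram[OF A real z a a] by (simp add: sum_cnj_mult_self)
    then show ?thesis by (simp add: L2_set_def sum_nonneg)
  qed
  then have "(\<Sum>z\<in>Z. (L2_set (\<lambda>w. cmod (cpolymat J A (lagrange_basis Z z) w a)) J)\<^sup>2)
      = Re (\<Sum>z\<in>Z. cpolymat J A (lagrange_basis Z z) a a)"
    by simp
  then show ?thesis
    using spectral_projections_sum_diag[OF a] by (simp add: L2_set_def)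
qed
end

lemma poly_map_poly_of_real: "poly (map_poly of_real p) (of_real t) = of_real (poly p t)"
  by (induction p) (auto simp: map_poly_pCons)

lemma hermitian_polymat_entry_le:
  assumes J: "finite J" and A: "hermitian_on J A" and norm: "op_norm_le J A r" and r: "r \<ge> 0"
    and x: "x \<in> J" and y: "y \<in> J" and p: "\<And>t. \<bar>t\<bar> \<le> r \<Longrightarrow> \<bar>poly p t\<bar> \<le> \<epsilon>"
  shows "cmod (polymat J A p x y) \<le> \<epsilon>"
proof -
  have eps: "\<epsilon> \<ge> 0" using p[of 0] r by auto
  obtain Z where Z: "finite Z" "Z \<subseteq> eigenvalues J A" and ann: "annihilates (vanishing_poly Z) J A"
    using exists_annihilating_vanishing_poly[OF J A] by blast
  have real: "Z \<subseteq> \<real>" using Z(2) eigenvalue_hermitian_real[OF J A] by auto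
  define E where "E z = cpolymat J A (lagrange_basis Z z)" for z
  define nr where "nr z a = L2_set (\<lambda>w. cmod (E z w a)) J" for z a
  have p_le: "cmod (poly (map_poly complex_of_real p) z) \<le> \<epsilon>" if z: "z \<in> Z" for z
  proof -
    have "z = complex_of_real (Re z)" using real z by (simp add: subset_iff)
    moreover have "\<bar>Re z\<bar> \<le> r"
      using eigenvalue_norm_le[OF J norm r] Z(2) z abs_Re_le_cmod by (meson order_trans subsetD)
    ultimately show ?thesis
      using p by (metis norm_of_real poly_map_poly_of_real)
  qed
  have "polymat J A p x y = (\<Sum>z\<in>Z. poly (map_poly complex_of_real p) z * E z x y)"
    unfolding polymat_eq_cpolymat E_def by (rule cpolymat_spectral_decomposition[OF J Z(1) ann x y])
  then have "cmod (polymat J A p x y) \<le> (\<Sum>z\<in>Z. cmod (poly (map_poly complex_of_real p) z) * cmod (E z x y))"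
    by (simp add: norm_mult order_trans[OF norm_sum])
  also have "\<dots> \<le> (\<Sum>z\<in>Z. \<epsilon> * (\<bar>nr z x\<bar> * \<bar>nr z y\<bar>))"
    using p_le spectral_projection_norm_le[OF J Z(1) ann A real _ x y] eps
    by (intro sum_mono mult_mono) (auto simp: nr_def E_def)
  also have "\<dots> \<le> \<epsilon> * (L2_set (\<lambda>z. nr z x) Z * L2_set (\<lambda>z. nr z y) Z)"
    unfolding sum_distrib_left[symmetric] by (rule mult_left_mono[OF L2_set_mult_ineq eps])
  also have "\<dots> = \<epsilon>"
    using L2_set_spectral_projections[OF J Z(1) ann A real] x y by (simp add: nr_def E_def)
  finally show ?thesis .
qed

section \<open>Continuous functional calculus\<close>

lemma polymat_eq_sum:
  "degree p \<le> N \<Longrightarrow> polymat I A p x y = (\<Sum>i\<le>N. complex_of_real (coeff p i) * mpow I A i x y)"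
  unfolding polymat_def by (rule sum.mono_neutral_left) (auto simp: coeff_eq_0)

lemma polymat_diff: "polymat I A (p - q) x y = polymat I A p x y - polymat I A q x y"
proof -
  let ?N = "max (degree p) (degree q)"
  have "degree (p - q) \<le> ?N" by (rule degree_diff_le) auto
  then show ?thesis
    by (simp add: polymat_eq_sum[of _ ?N] sum_subtractf algebra_simps)
qed

definition polymat_entry_bounded :: "'a set \<Rightarrow> ('a \<Rightarrow> 'a \<Rightarrow> complex) \<Rightarrow> 'a \<Rightarrow> 'a \<Rightarrow> real \<Rightarrow> bool" where
  "polymat_entry_bounded I A x y r \<longleftrightarrow>
     (\<forall>p \<epsilon>. (\<forall>t. \<bar>t\<bar> \<le> r \<longrightarrow> \<bar>poly p t\<bar> \<le> \<epsilon>) \<longrightarrow> cmod (polymat I A p x y) \<le> \<epsilon>)"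

lemma polymat_entry_boundedD:
  "polymat_entry_bounded I A x y r \<Longrightarrow> (\<And>t. \<bar>t\<bar> \<le> r \<Longrightarrow> \<bar>poly p t\<bar> \<le> \<epsilon>) \<Longrightarrow> cmod (polymat I A p x y) \<le> \<epsilon>"
  unfolding polymat_entry_bounded_def by blast

lemma polymat_entry_bounded_diff:
  assumes "polymat_entry_bounded I A x y r" "\<And>t. \<bar>t\<bar> \<le> r \<Longrightarrow> \<bar>poly p t - poly q t\<bar> \<le> d"
  shows "cmod (polymat I A p x y - polymat I A q x y) \<le> d"
  using polymat_entry_boundedD[OF assms(1), of "p - q" d] assms(2) by (simp add: polymat_diff)

lemma exists_poly_approx:
  fixes f :: "real \<Rightarrow> real"
  assumes "continuous_on UNIV f" "e > 0"
  shows "\<exists>p::real poly. \<forall>t. \<bar>t\<bar> \<le> r \<longrightarrow> \<bar>poly p t - f t\<bar> < e"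
proof -
  have "continuous_on {-r..r} f" using assms(1) continuous_on_subset by blast
  then obtain g where g: "real_polynomial_function g" "\<And>x. x \<in> {-r..r} \<Longrightarrow> \<bar>f x - g x\<bar> < e"
    using Stone_Weierstrass_real_polynomial_function[of "{-r..r}" f e] assms(2) by auto
  obtain a n where gs: "g = (\<lambda>x. \<Sum>i\<le>n. a i * x ^ i)"
    using g(1) real_polynomial_function_iff_sum by blast
  have "poly (\<Sum>i\<le>n. monom (a i) i) t = g t" for t
    by (simp add: gs poly_sum poly_monom)
  with g(2) show ?thesis
    by (intro exI[of _ "\<Sum>i\<le>n. monom (a i) i"]) (auto simp: abs_minus_commute abs_le_iff)
qed

lemma exists_poly_seq_uniform_limit:
  fixes f :: "real \<Rightarrow> real"
  assumes "continuous_on UNIV f"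
  shows "\<exists>ps :: nat \<Rightarrow> real poly. \<forall>r. uniform_limit {-r..r} (\<lambda>k. poly (ps k)) f sequentially"
proof -
  have "\<forall>k. \<exists>p::real poly. \<forall>t. \<bar>t\<bar> \<le> real k \<longrightarrow> \<bar>poly p t - f t\<bar> < 1 / (real k + 1)"
    using exists_poly_approx[OF assms] by simp
  then obtain ps where ps: "\<And>k t. \<bar>t\<bar> \<le> real k \<Longrightarrow> \<bar>poly (ps k) t - f t\<bar> < 1 / (real k + 1)"
    by metis
  have "uniform_limit {-r..r} (\<lambda>k. poly (ps k)) f sequentially" for r
  proof (rule uniform_limitI)
    fix e :: real assume e: "e > 0"
    obtain N :: nat where N: "N \<ge> r" "N \<ge> 1 / e"
      using real_arch_simple[of "max r (1 / e)"] by auto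
    have "dist (poly (ps k) t) (f t) < e" if k: "N \<le> k" and t: "t \<in> {-r..r}" for k t
    proof -
      have "1 \<le> real N * e" using N(2) e by (simp add: divide_le_eq)
      also have "\<dots> < (real k + 1) * e" using k e by simp
      finally have "1 / (real k + 1) < e" by (simp add: divide_less_eq mult.commute)
      moreover have "\<bar>t\<bar> \<le> real k" using t k N(1) by auto
      ultimately show ?thesis using ps[of t k] by (simp add: dist_real_def)
    qed
    then show "\<forall>\<^sub>F k in sequentially. \<forall>t\<in>{-r..r}. dist (poly (ps k) t) (f t) < e"
      unfolding eventually_sequentially by blast
  qed
  then show ?thesis by blast
qed

lemma eventually_poly_close:
  fixes f :: "real \<Rightarrow> real" and ps :: "nat \<Rightarrow> real poly"
  assumes "uniform_limit {-r..r} (\<lambda>k. poly (ps k)) f sequentially" "e > 0"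
  shows "\<forall>\<^sub>F k in sequentially. \<forall>t. \<bar>t\<bar> \<le> r \<longrightarrow> \<bar>poly (ps k) t - f t\<bar> < e"
  using uniform_limitD[OF assms] by eventually_elim (auto simp: dist_real_def abs_le_iff)

lemma abs_diff_le_of_close: "\<bar>a - c\<bar> < d \<Longrightarrow> \<bar>b - c\<bar> < e \<Longrightarrow> \<bar>a - b\<bar> \<le> d + (e :: real)"
  by arith

context
  fixes I :: "'a set" and A x y r
  assumes bounded: "polymat_entry_bounded I A x y r"
begin

lemma polymat_uniform_limit_close:
  fixes f :: "real \<Rightarrow> real"
  assumes ps: "uniform_limit {-r..r} (\<lambda>k. poly (ps k)) f sequentially"
    and qs: "uniform_limit {-r..r} (\<lambda>k. poly (qs k)) f sequentially" and e: "e > 0"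
  shows "\<forall>\<^sub>F k in sequentially. cmod (polymat I A (ps k) x y - polymat I A (qs k) x y) \<le> e"
proof -
  have e2: "e / 2 > 0" using e by simp
  show ?thesis
    using eventually_conj[OF eventually_poly_close[OF ps e2] eventually_poly_close[OF qs e2]]
  proof eventually_elim
    case (elim k)
    show ?case
    proof (rule polymat_entry_bounded_diff[OF bounded])
      fix t :: real assume "\<bar>t\<bar> \<le> r"
      with elim have "\<bar>poly (ps k) t - poly (qs k) t\<bar> \<le> e / 2 + e / 2"
        by (blast intro: abs_diff_le_of_close)
      then show "\<bar>poly (ps k) t - poly (qs k) t\<bar> \<le> e" by simp
    qed
  qed
qed

lemma polymat_uniform_limit_Cauchy:
  fixes f :: "real \<Rightarrow> real"
  assumes ps: "uniform_limit {-r..r} (\<lambda>k. poly (ps k)) f sequentially"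
  shows "Cauchy (\<lambda>k. polymat I A (ps k) x y)"
proof (rule CauchyI)
  fix e :: real assume e: "e > 0"
  obtain N where N: "\<And>n t. n \<ge> N \<Longrightarrow> \<bar>t\<bar> \<le> r \<Longrightarrow> \<bar>poly (ps n) t - f t\<bar> < e / 3"
    using eventually_poly_close[OF ps, of "e / 3"] e by (auto simp: eventually_sequentially)
  have close: "cmod (polymat I A (ps m) x y - polymat I A (ps n) x y) \<le> e / 3 + e / 3" if "N \<le> m" "N \<le> n" for m n
  proof (rule polymat_entry_bounded_diff[OF bounded])
    fix t :: real assume t: "\<bar>t\<bar> \<le> r"
    show "\<bar>poly (ps m) t - poly (ps n) t\<bar> \<le> e / 3 + e / 3"
      by (rule abs_diff_le_of_close[OF N[OF that(1) t] N[OF that(2) t]])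
  qed
  show "\<exists>M. \<forall>m\<ge>M. \<forall>n\<ge>M. cmod (polymat I A (ps m) x y - polymat I A (ps n) x y) < e"
  proof (intro exI[of _ N] allI impI)
    fix m n assume "N \<le> m" "N \<le> n"
    from close[OF this] e show "cmod (polymat I A (ps m) x y - polymat I A (ps n) x y) < e"
      by linarith
  qed
qed

lemma tendsto_fcalc:
  fixes f :: "real \<Rightarrow> real"
  assumes ps: "\<And>r. uniform_limit {-r..r} (\<lambda>k. poly (ps k)) f sequentially"
  shows "(\<lambda>k. polymat I A (ps k) x y) \<longlonglongrightarrow> fcalc I A f x y"
proof -
  obtain c where c: "(\<lambda>k. polymat I A (ps k) x y) \<longlonglongrightarrow> c"
    using polymat_uniform_limit_Cauchy[OF ps] Cauchy_convergent_iff convergent_def by blast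
  have "(\<lambda>k. polymat I A (qs k) x y) \<longlonglongrightarrow> c"
    if qs: "\<forall>r. uniform_limit {-r..r} (\<lambda>k. poly (qs k)) f sequentially" for qs
  proof -
    have "(\<lambda>k. polymat I A (qs k) x y - polymat I A (ps k) x y) \<longlonglongrightarrow> 0"
    proof (rule tendstoI)
      fix e :: real assume e: "e > 0"
      have "\<forall>\<^sub>F k in sequentially. cmod (polymat I A (qs k) x y - polymat I A (ps k) x y) \<le> e / 2"
        by (rule polymat_uniform_limit_close[OF qs[rule_format] ps]) (use e in simp)
      then show "\<forall>\<^sub>F k in sequentially. dist (polymat I A (qs k) x y - polymat I A (ps k) x y) 0 < e"
        by (rule eventually_mono) (use e in simp)
    qed
    from tendsto_add[OF this c] show ?thesis by simp
  qed
  moreover have "c' = c"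
    if "\<forall>qs. (\<forall>r. uniform_limit {-r..r} (\<lambda>k. poly (qs k)) f sequentially) \<longrightarrow>
         (\<lambda>k. polymat I A (qs k) x y) \<longlonglongrightarrow> c'" for c'
    using that ps c LIMSEQ_unique by blast
  ultimately have "fcalc I A f x y = c"
    unfolding fcalc_def by (intro the_equality) blast+
  with c show ?thesis by simp
qed

lemma fcalc_approx:
  fixes f :: "real \<Rightarrow> real"
  assumes f: "continuous_on UNIV f" and p: "\<And>t. \<bar>t\<bar> \<le> r \<Longrightarrow> \<bar>poly p t - f t\<bar> \<le> \<epsilon>"
  shows "cmod (fcalc I A f x y - polymat I A p x y) \<le> \<epsilon>"
proof (rule field_le_epsilon)
  fix d :: real assume d: "d > 0"
  obtain ps where ps: "\<And>r. uniform_limit {-r..r} (\<lambda>k. poly (ps k)) f sequentially"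
    using exists_poly_seq_uniform_limit[OF f] by blast
  have "(\<lambda>k. cmod (polymat I A (ps k) x y - polymat I A p x y)) \<longlonglongrightarrow> cmod (fcalc I A f x y - polymat I A p x y)"
    by (intro tendsto_norm tendsto_diff tendsto_fcalc ps tendsto_const)
  moreover have "\<forall>\<^sub>F k in sequentially. cmod (polymat I A (ps k) x y - polymat I A p x y) \<le> \<epsilon> + d"
    using eventually_poly_close[OF ps[of r] d]
  proof eventually_elim
    case (elim k)
    show ?case
    proof (rule polymat_entry_bounded_diff[OF bounded])
      fix t :: real assume t: "\<bar>t\<bar> \<le> r"
      from elim t have "\<bar>poly (ps k) t - f t\<bar> < d" by blast
      with p[OF t] show "\<bar>poly (ps k) t - poly p t\<bar> \<le> \<epsilon> + d" by arith
    qed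
  qed
  ultimately show "cmod (fcalc I A f x y - polymat I A p x y) \<le> \<epsilon> + d"
    by (rule tendsto_upperbound) simp
qed

end

lemma hermitian_polymat_entry_bounded:
  assumes "finite J" "hermitian_on J A" "op_norm_le J A r" "r \<ge> 0" "x \<in> J" "y \<in> J"
  shows "polymat_entry_bounded J A x y r"
  unfolding polymat_entry_bounded_def using hermitian_polymat_entry_le[OF assms] by blast

lemma sum_sq_le_card_mult_sum_sq:
  assumes "finite F"
  shows "(\<Sum>i\<in>F. a i)\<^sup>2 \<le> real (card F) * (\<Sum>i\<in>F. (a i)\<^sup>2)"
proof -
  have "(\<Sum>i\<in>F. a i * 1)\<^sup>2 \<le> (\<Sum>i\<in>F. (a i)\<^sup>2) * (\<Sum>i\<in>F. 1\<^sup>2)"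
    by (rule Cauchy_Schwarz_ineq_sum)
  then show ?thesis by (simp add: mult.commute)
qed

lemma schur_op_norm_le:
  assumes J: "finite J" and B: "B \<ge> 0"
    and entry: "\<And>x y. x \<in> J \<Longrightarrow> y \<in> J \<Longrightarrow> cmod (A x y) \<le> B"
    and row: "\<And>x. x \<in> J \<Longrightarrow> card {y\<in>J. A x y \<noteq> 0} \<le> D"
    and col: "\<And>y. y \<in> J \<Longrightarrow> card {x\<in>J. A x y \<noteq> 0} \<le> D"
  shows "op_norm_le J A (B * real D)"
  unfolding op_norm_le_def mvec_finite[OF J]
proof
  fix u :: "'a \<Rightarrow> complex"
  let ?w = "\<lambda>x y. if A x y \<noteq> 0 then (cmod (u y))\<^sup>2 else 0"
  have row_le: "(cmod (\<Sum>y\<in>J. A x y * u y))\<^sup>2 \<le> B\<^sup>2 * real D * (\<Sum>y\<in>J. ?w x y)" if x: "x \<in> J" for x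
  proof -
    let ?N = "{y\<in>J. A x y \<noteq> 0}"
    have "(\<Sum>y\<in>J. A x y * u y) = (\<Sum>y\<in>?N. A x y * u y)"
      using J by (intro sum.mono_neutral_right) auto
    then have "cmod (\<Sum>y\<in>J. A x y * u y) \<le> (\<Sum>y\<in>?N. cmod (A x y) * cmod (u y))"
      by (simp add: norm_mult order_trans[OF norm_sum])
    also have "\<dots> \<le> (\<Sum>y\<in>?N. B * cmod (u y))"
      using entry x by (intro sum_mono mult_right_mono) auto
    finally have "(cmod (\<Sum>y\<in>J. A x y * u y))\<^sup>2 \<le> (\<Sum>y\<in>?N. B * cmod (u y))\<^sup>2"
      by (intro power_mono) auto
    also have "\<dots> \<le> real (card ?N) * (\<Sum>y\<in>?N. (B * cmod (u y))\<^sup>2)"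
      using J by (intro sum_sq_le_card_mult_sum_sq) simp
    also have "\<dots> \<le> real D * (\<Sum>y\<in>?N. (B * cmod (u y))\<^sup>2)"
      using row[OF x] by (intro mult_right_mono) (auto simp: sum_nonneg)
    also have "(\<Sum>y\<in>?N. (B * cmod (u y))\<^sup>2) = B\<^sup>2 * (\<Sum>y\<in>J. ?w x y)"
      using J by (simp add: sum.inter_filter sum_distrib_left power_mult_distrib if_distrib[of "\<lambda>c. B\<^sup>2 * c"] cong: if_cong)
    finally show ?thesis by (simp add: mult_ac)
  qed
  have col_sum: "(\<Sum>x\<in>J. ?w x y) = real (card {x\<in>J. A x y \<noteq> 0}) * (cmod (u y))\<^sup>2" for y
    using J by (simp add: sum.inter_filter[symmetric])
  have cols: "(\<Sum>x\<in>J. \<Sum>y\<in>J. ?w x y) \<le> (\<Sum>y\<in>J. real D * (cmod (u y))\<^sup>2)"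
    unfolding sum.swap[of _ J J] col_sum using col by (intro sum_mono mult_right_mono) auto
  have "(\<Sum>x\<in>J. (cmod (\<Sum>y\<in>J. A x y * u y))\<^sup>2) \<le> B\<^sup>2 * real D * (\<Sum>x\<in>J. \<Sum>y\<in>J. ?w x y)"
    using row_le by (simp add: sum_distrib_left sum_mono)
  also have "\<dots> \<le> B\<^sup>2 * real D * (\<Sum>y\<in>J. real D * (cmod (u y))\<^sup>2)"
    using cols by (intro mult_left_mono) auto
  also have "\<dots> = (B * real D)\<^sup>2 * (\<Sum>x\<in>J. (cmod (u x))\<^sup>2)"
    by (simp add: sum_distrib_left power2_eq_square mult_ac)
  finally show "(\<Sum>x\<in>J. (cmod (\<Sum>y\<in>J. A x y * u y))\<^sup>2) \<le> (B * real D)\<^sup>2 * (\<Sum>x\<in>J. (cmod (u x))\<^sup>2)" .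
qed

section \<open>Locality of matrix powers\<close>

lemma mpow_restrict_eq:
  assumes JI: "J \<subseteq> I" and LJ: "\<And>k. k < K \<Longrightarrow> L k \<subseteq> J"
    and step: "\<And>k x z. k < K \<Longrightarrow> x \<in> L (Suc k) \<Longrightarrow> z \<in> I \<Longrightarrow> A x z \<noteq> 0 \<Longrightarrow> z \<in> L k"
  shows "k \<le> K \<Longrightarrow> x \<in> L k \<Longrightarrow> y \<in> J \<Longrightarrow> mpow I A k x y = mpow J A k x y"
proof (induction k arbitrary: x)
  case 0
  then show ?case by simp
next
  case (Suc k)
  have "mpow I A (Suc k) x y = (\<Sum>\<^sub>\<infinity>z\<in>I. A x z * mpow I A k z y)" by (simp add: mmult_def)
  also have "\<dots> = (\<Sum>\<^sub>\<infinity>z\<in>J. A x z * mpow I A k z y)"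
  proof (rule infsum_cong_neutral)
    fix z assume "z \<in> I - J"
    then have "A x z = 0" using step[of k x z] Suc.prems LJ[of k] by auto
    then show "A x z * mpow I A k z y = 0" by simp
  qed (use JI in auto)
  also have "\<dots> = (\<Sum>\<^sub>\<infinity>z\<in>J. A x z * mpow J A k z y)"
  proof (rule infsum_cong)
    fix z assume z: "z \<in> J"
    show "A x z * mpow I A k z y = A x z * mpow J A k z y"
    proof (cases "A x z = 0")
      case False
      then have "z \<in> L k" using step[of k x z] Suc.prems z JI by auto
      then show ?thesis using Suc.IH[of z] Suc.prems by simp
    qed simp
  qed
  also have "\<dots> = mpow J A (Suc k) x y" by (simp add: mmult_def)
  finally show ?case .
qed

text \<open>\<open>L k\<close> has to contain every index reachable from \<open>x\<close> in at most \<open>K - k\<close> steps along nonzero entries of \<open>A\<close>.\<close>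
lemma polymat_restrict_eq:
  assumes JI: "J \<subseteq> I" and LJ: "\<And>k. k < K \<Longrightarrow> L k \<subseteq> J"
    and step: "\<And>k x z. k < K \<Longrightarrow> x \<in> L (Suc k) \<Longrightarrow> z \<in> I \<Longrightarrow> A x z \<noteq> 0 \<Longrightarrow> z \<in> L k"
    and x: "\<And>k. k \<le> K \<Longrightarrow> x \<in> L k" and y: "y \<in> J" and p: "degree p \<le> K"
  shows "polymat I A p x y = polymat J A p x y"
  unfolding polymat_def
  using mpow_restrict_eq[OF JI LJ step, where x = x and y = y] x y p by (intro sum.cong) auto

lemma mpow_reindex:
  assumes J2: "finite J2" and bij: "bij_betw \<phi> J2 J1"
    and entries: "\<And>a b. a \<in> J2 \<Longrightarrow> b \<in> J2 \<Longrightarrow> A1 (\<phi> a) (\<phi> b) = A2 a b"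
  shows "a \<in> J2 \<Longrightarrow> b \<in> J2 \<Longrightarrow> mpow J1 A1 k (\<phi> a) (\<phi> b) = mpow J2 A2 k a b"
proof (induction k arbitrary: a)
  case 0
  then show ?case using bij by (auto simp: bij_betw_def inj_on_def)
next
  case (Suc k)
  have J1: "J1 = \<phi> ` J2" and inj: "inj_on \<phi> J2" using bij by (auto simp: bij_betw_def)
  have "mpow J1 A1 (Suc k) (\<phi> a) (\<phi> b) = (\<Sum>z\<in>\<phi> ` J2. A1 (\<phi> a) z * mpow J1 A1 k z (\<phi> b))"
    using J2 by (simp add: mmult_def J1)
  also have "\<dots> = (\<Sum>c\<in>J2. A2 a c * mpow J2 A2 k c b)"
    using inj Suc entries by (simp add: sum.reindex)
  also have "\<dots> = mpow J2 A2 (Suc k) a b" using J2 by (simp add: mmult_def)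
  finally show ?case .
qed

lemma polymat_reindex:
  assumes "finite J2" "bij_betw \<phi> J2 J1"
    and "\<And>a b. a \<in> J2 \<Longrightarrow> b \<in> J2 \<Longrightarrow> A1 (\<phi> a) (\<phi> b) = A2 a b" and "a \<in> J2" "b \<in> J2"
  shows "polymat J1 A1 p (\<phi> a) (\<phi> b) = polymat J2 A2 p a b"
  unfolding polymat_def using mpow_reindex[of J2 \<phi> J1 A1 A2, OF assms(1-3) assms(4,5)] by simp

section \<open>Word metric and local copies of Cayley balls\<close>

lemma wlen_le: "set xs \<subseteq> S \<Longrightarrow> sum_list xs = g \<Longrightarrow> wlen S g \<le> length xs"
  unfolding wlen_def by (rule Least_le) blast

lemma wlen_0 [simp]: "wlen S 0 = 0"
  using wlen_le[of "[]" S 0] by simp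

lemma wlen_gen: "s \<in> S \<Longrightarrow> wlen S s \<le> 1"
  using wlen_le[of "[s]" S s] by simp

lemma ballS_mono: "R \<le> R' \<Longrightarrow> ballS S R \<subseteq> ballS S R'"
  by (auto simp: ballS_def)

lemma dE_le_mono: "dE_le S V \<sigma> n x y R \<Longrightarrow> R \<le> R' \<Longrightarrow> dE_le S V \<sigma> n x y R'"
  unfolding dE_le_def using le_trans by blast

locale word_metric =
  fixes S :: "'g::group_add set"
  assumes finite_S: "finite S" and uminus_S: "\<forall>s\<in>S. - s \<in> S" and generates_S: "generates S"
begin

lemma wlen_word: "\<exists>xs. length xs = wlen S g \<and> set xs \<subseteq> S \<and> sum_list xs = g"
proof -
  obtain xs where "set xs \<subseteq> S \<and> sum_list xs = g"
    using generates_S unfolding generates_def by blast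
  then have "\<exists>n xs. length xs = n \<and> set xs \<subseteq> S \<and> sum_list xs = g" by blast
  then show ?thesis unfolding wlen_def by (rule LeastI_ex)
qed

lemma wlen_add: "wlen S (a + b) \<le> wlen S a + wlen S b"
proof -
  obtain xs where xs: "length xs = wlen S a" "set xs \<subseteq> S" "sum_list xs = a"
    using wlen_word by blast
  obtain ys where ys: "length ys = wlen S b" "set ys \<subseteq> S" "sum_list ys = b"
    using wlen_word by blast
  have "wlen S (a + b) \<le> length (xs @ ys)" using xs ys by (intro wlen_le) auto
  then show ?thesis using xs ys by simp
qed

lemma wlen_uminus_le: "wlen S (- a) \<le> wlen S a"
proof -
  obtain xs where xs: "length xs = wlen S a" "set xs \<subseteq> S" "sum_list xs = a"
    using wlen_word by blast
  have "sum_list (rev (map uminus xs)) = - sum_list xs"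
    by (induction xs) (auto simp: minus_add)
  then have "wlen S (- a) \<le> length (rev (map uminus xs))"
    using xs uminus_S by (intro wlen_le) auto
  then show ?thesis using xs by simp
qed

lemma wlen_uminus [simp]: "wlen S (- a) = wlen S a"
  using wlen_uminus_le[of a] wlen_uminus_le[of "- a"] by simp

lemma wlen_diff_commute: "wlen S (x - y) = wlen S (y - x)"
  by (metis minus_diff_eq wlen_uminus)

lemma finite_ballS: "finite (ballS S R)"
proof -
  have "ballS S R \<subseteq> sum_list ` {xs. set xs \<subseteq> S \<and> length xs \<le> R}"
  proof
    fix g assume "g \<in> ballS S R"
    moreover obtain xs where "length xs = wlen S g" "set xs \<subseteq> S" "sum_list xs = g"
      using wlen_word by blast
    ultimately show "g \<in> sum_list ` {xs. set xs \<subseteq> S \<and> length xs \<le> R}"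
      by (force simp: ballS_def)
  qed
  moreover have "finite {xs. set xs \<subseteq> S \<and> length xs \<le> R}"
    by (rule finite_lists_length_le[OF finite_S])
  ultimately show ?thesis by (meson finite_surj)
qed

end

text \<open>The map \<open>a \<mapsto> \<sigma> n a w\<close> embeds the Cayley ball of radius \<open>T\<close> around \<open>w\<close>.\<close>
definition local_copy ::
  "'g::group_add set \<Rightarrow> (nat \<Rightarrow> 'v set) \<Rightarrow> (nat \<Rightarrow> 'g \<Rightarrow> 'v \<Rightarrow> 'v) \<Rightarrow> nat \<Rightarrow> nat \<Rightarrow> 'v \<Rightarrow> bool" where
  "local_copy S V \<sigma> n T w \<longleftrightarrow> w \<in> V n \<and>
     (\<forall>h a. wlen S h + wlen S a \<le> T \<longrightarrow> \<sigma> n h (\<sigma> n a w) = \<sigma> n (h + a) w) \<and>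
     (\<forall>a b. wlen S a \<le> T \<and> wlen S b \<le> T \<and> \<sigma> n a w = \<sigma> n b w \<longrightarrow> a = b)"

definition mult_free_on_ball ::
  "'g::group_add set \<Rightarrow> (nat \<Rightarrow> 'v set) \<Rightarrow> (nat \<Rightarrow> 'g \<Rightarrow> 'v \<Rightarrow> 'v) \<Rightarrow> nat \<Rightarrow> nat \<Rightarrow> 'v \<Rightarrow> bool" where
  "mult_free_on_ball S V \<sigma> n T v \<longleftrightarrow> v \<in> V n \<and>
     (\<forall>h\<in>ballS S (2 * T). \<forall>a\<in>ballS S (2 * T). \<sigma> n h (\<sigma> n a v) = \<sigma> n (h + a) v) \<and>
     (\<forall>g\<in>ballS S (2 * T). g \<noteq> 0 \<longrightarrow> \<sigma> n g v \<noteq> v)"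

text \<open>Labels are read from the right: \<open>(s, True)\<close> follows an \<open>s\<close>-edge forwards and
  \<open>(s, False)\<close> follows one backwards.\<close>
fun label_walk :: "(nat \<Rightarrow> 'g \<Rightarrow> 'v \<Rightarrow> 'v) \<Rightarrow> (nat \<Rightarrow> 'v set) \<Rightarrow> nat \<Rightarrow> ('g \<times> bool) list \<Rightarrow> 'v \<Rightarrow> 'v" where
  "label_walk \<sigma> V n [] x = x"
| "label_walk \<sigma> V n (st # ls) x =
     (if snd st then \<sigma> n (fst st) (label_walk \<sigma> V n ls x)
      else inv_into (V n) (\<sigma> n (fst st)) (label_walk \<sigma> V n ls x))"

locale sofic_action = word_metric S for S :: "'g::group_add set" +
  fixes V :: "nat \<Rightarrow> 'v set" and \<sigma> :: "nat \<Rightarrow> 'g \<Rightarrow> 'v \<Rightarrow> 'v"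
  assumes bij_\<sigma>: "\<forall>n g. bij_betw (\<sigma> n g) (V n) (V n)"
begin

lemma \<sigma>_in: "w \<in> V n \<Longrightarrow> \<sigma> n g w \<in> V n"
  using bij_\<sigma> by (meson bij_betwE)

lemma \<sigma>_inj: "x \<in> V n \<Longrightarrow> y \<in> V n \<Longrightarrow> \<sigma> n g x = \<sigma> n g y \<Longrightarrow> x = y"
  using bij_\<sigma> by (meson bij_betw_imp_inj_on inj_onD)

lemma dE_le_imp_label_walk:
  assumes "dE_le S V \<sigma> n x y M"
  shows "\<exists>ls. set ls \<subseteq> S \<times> UNIV \<and> length ls \<le> M \<and> y = label_walk \<sigma> V n ls x"
proof -
  obtain p k where p: "k \<le> M" "p 0 = x" "p k = y" "\<forall>i\<le>k. p i \<in> V n"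
    "\<forall>i<k. \<exists>s\<in>S. p (Suc i) = \<sigma> n s (p i) \<or> p i = \<sigma> n s (p (Suc i))"
    using assms unfolding dE_le_def by blast
  have "i \<le> k \<Longrightarrow> \<exists>ls. set ls \<subseteq> S \<times> UNIV \<and> length ls = i \<and> p i = label_walk \<sigma> V n ls x" for i
  proof (induction i)
    case 0
    then show ?case using p(2) by (intro exI[of _ "[]"]) simp
  next
    case (Suc i)
    then obtain ls where ls: "set ls \<subseteq> S \<times> UNIV" "length ls = i" "p i = label_walk \<sigma> V n ls x"
      by auto
    obtain s where s: "s \<in> S" "p (Suc i) = \<sigma> n s (p i) \<or> p i = \<sigma> n s (p (Suc i))"
      using p(5) Suc.prems by (meson Suc_le_lessD)
    show ?case
    proof (cases "p (Suc i) = \<sigma> n s (p i)")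
      case True
      then show ?thesis using ls s by (intro exI[of _ "(s, True) # ls"]) auto
    next
      case False
      then have "p i = \<sigma> n s (p (Suc i))" using s by blast
      moreover have "inj_on (\<sigma> n s) (V n)" using bij_\<sigma> bij_betw_imp_inj_on by blast
      ultimately have "inv_into (V n) (\<sigma> n s) (p i) = p (Suc i)"
        using p(4) Suc.prems by (simp add: inv_into_f_f)
      then show ?thesis using ls s by (intro exI[of _ "(s, False) # ls"]) auto
    qed
  qed
  from this[of k] p(1,3) show ?thesis by auto
qed

lemma card_dE_ball_le:
  "card {y\<in>V n. dE_le S V \<sigma> n x y M} \<le> card {ls :: ('g \<times> bool) list. set ls \<subseteq> S \<times> UNIV \<and> length ls \<le> M}"
proof -
  let ?L = "{ls :: ('g \<times> bool) list. set ls \<subseteq> S \<times> UNIV \<and> length ls \<le> M}"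
  have fin: "finite ?L" using finite_S by (intro finite_lists_length_le) auto
  have "{y\<in>V n. dE_le S V \<sigma> n x y M} \<subseteq> (\<lambda>ls. label_walk \<sigma> V n ls x) ` ?L"
    using dE_le_imp_label_walk by blast
  then have "card {y\<in>V n. dE_le S V \<sigma> n x y M} \<le> card ((\<lambda>ls. label_walk \<sigma> V n ls x) ` ?L)"
    using fin by (intro card_mono) auto
  also have "\<dots> \<le> card ?L" by (rule card_image_le[OF fin])
  finally show ?thesis .
qed

lemma dE_le_step: "dE_le S V \<sigma> n x y R \<Longrightarrow> s \<in> S \<Longrightarrow> dE_le S V \<sigma> n x (\<sigma> n s y) (Suc R)"
proof -
  assume "dE_le S V \<sigma> n x y R" "s \<in> S"
  then obtain p k where p: "k \<le> R" "p 0 = x" "p k = y" "\<forall>i\<le>k. p i \<in> V n"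
    "\<forall>i<k. \<exists>s\<in>S. p (Suc i) = \<sigma> n s (p i) \<or> p i = \<sigma> n s (p (Suc i))"
    unfolding dE_le_def by blast
  define p' where "p' i = (if i \<le> k then p i else \<sigma> n s y)" for i
  have "\<forall>i\<le>Suc k. p' i \<in> V n"
    using p \<sigma>_in by (auto simp: p'_def le_Suc_eq)
  moreover have "\<forall>i<Suc k. \<exists>s'\<in>S. p' (Suc i) = \<sigma> n s' (p' i) \<or> p' i = \<sigma> n s' (p' (Suc i))"
    using p(3,5) \<open>s \<in> S\<close> by (auto simp: p'_def less_Suc_eq)
  ultimately show ?thesis
    using p(1-3) unfolding dE_le_def by (intro exI[of _ p'] exI[of _ "Suc k"]) (auto simp: p'_def)
qed

context
  fixes n T w
  assumes copy: "local_copy S V \<sigma> n T w"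
begin

lemma local_copy_in: "w \<in> V n"
  using copy by (simp add: local_copy_def)

lemma local_copy_mult: "wlen S h + wlen S a \<le> T \<Longrightarrow> \<sigma> n h (\<sigma> n a w) = \<sigma> n (h + a) w"
  using copy by (simp add: local_copy_def)

lemma local_copy_inj: "wlen S a \<le> T \<Longrightarrow> wlen S b \<le> T \<Longrightarrow> \<sigma> n a w = \<sigma> n b w \<Longrightarrow> a = b"
  using copy by (simp add: local_copy_def)

lemma local_copy_0: "\<sigma> n 0 w = w"
  using local_copy_mult[of 0 0] \<sigma>_inj[OF \<sigma>_in local_copy_in] local_copy_in by simp

lemma local_copy_shift:
  assumes g: "wlen S g + T' \<le> T"
  shows "local_copy S V \<sigma> n T' (\<sigma> n g w)"
proof -
  have "\<sigma> n h (\<sigma> n a (\<sigma> n g w)) = \<sigma> n (h + a) (\<sigma> n g w)" if ha: "wlen S h + wlen S a \<le> T'" for h a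
  proof -
    have "\<sigma> n h (\<sigma> n a (\<sigma> n g w)) = \<sigma> n (h + (a + g)) w"
      using local_copy_mult[of a g] local_copy_mult[of h "a + g"] wlen_add[of a g] ha g by simp
    also have "\<dots> = \<sigma> n (h + a) (\<sigma> n g w)"
      using local_copy_mult[of "h + a" g] wlen_add[of h a] ha g by (simp add: add.assoc)
    finally show ?thesis .
  qed
  moreover have "a = b"
    if ab: "wlen S a \<le> T'" "wlen S b \<le> T'" "\<sigma> n a (\<sigma> n g w) = \<sigma> n b (\<sigma> n g w)" for a b
  proof -
    have "\<sigma> n (a + g) w = \<sigma> n (b + g) w" using ab local_copy_mult[of a g] local_copy_mult[of b g] g by simp
    then have "a + g = b + g"
      using wlen_add[of a g] wlen_add[of b g] ab g by (intro local_copy_inj) auto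
    then show ?thesis by simp
  qed
  ultimately show ?thesis
    unfolding local_copy_def using \<sigma>_in[OF local_copy_in] by blast
qed

lemma dE_le_imp_word:
  assumes d: "dE_le S V \<sigma> n w y k" and k: "k < T"
  shows "\<exists>h. wlen S h \<le> k \<and> y = \<sigma> n h w"
proof -
  obtain p k' where p: "k' \<le> k" "p 0 = w" "p k' = y" "\<forall>i\<le>k'. p i \<in> V n"
    "\<forall>i<k'. \<exists>s\<in>S. p (Suc i) = \<sigma> n s (p i) \<or> p i = \<sigma> n s (p (Suc i))"
    using d unfolding dE_le_def by blast
  have "i \<le> k' \<Longrightarrow> \<exists>h. wlen S h \<le> i \<and> p i = \<sigma> n h w" for i
  proof (induction i)
    case 0
    then show ?case using p(2) local_copy_0 by (intro exI[of _ 0]) simp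
  next
    case (Suc i)
    then obtain h where h: "wlen S h \<le> i" "p i = \<sigma> n h w" by auto
    obtain s where s: "s \<in> S" "p (Suc i) = \<sigma> n s (p i) \<or> p i = \<sigma> n s (p (Suc i))"
      using p(5) Suc.prems by (meson Suc_le_lessD)
    have i: "Suc i < T" using Suc.prems p(1) k by simp
    have ws: "wlen S s \<le> 1" "wlen S (- s) \<le> 1" using wlen_gen[OF s(1)] by simp_all
    show ?case
    proof (cases "p (Suc i) = \<sigma> n s (p i)")
      case True
      then have "p (Suc i) = \<sigma> n (s + h) w" using h local_copy_mult[of s h] ws i by simp
      moreover have "wlen S (s + h) \<le> Suc i" using wlen_add[of s h] ws h by linarith
      ultimately show ?thesis by blast
    next
      case False
      then have edge: "p i = \<sigma> n s (p (Suc i))" using s by blast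
      have w2: "wlen S (- s + h) \<le> Suc i" using wlen_add[of "- s" h] ws h by linarith
      have "\<sigma> n s (\<sigma> n (- s + h) w) = p i"
        using local_copy_mult[of s "- s + h"] ws w2 i h by (simp add: add.assoc[symmetric])
      then have "p (Suc i) = \<sigma> n (- s + h) w"
        using edge \<sigma>_inj[OF _ \<sigma>_in[OF local_copy_in]] p(4) Suc.prems by metis
      then show ?thesis using w2 by blast
    qed
  qed
  from this[of k'] p(1,3) show ?thesis by (meson order_refl order_trans)
qed

lemma dE_le_word:
  assumes h: "wlen S h \<le> k" and k: "k \<le> T"
  shows "dE_le S V \<sigma> n w (\<sigma> n h w) k"
proof -
  have walk: "set xs \<subseteq> S \<Longrightarrow> length xs \<le> T \<Longrightarrow> dE_le S V \<sigma> n w (\<sigma> n (sum_list xs) w) (length xs)" for xs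
  proof (induction xs)
    case Nil
    show ?case unfolding dE_le_def using local_copy_0 local_copy_in
      by (intro exI[of _ "\<lambda>_. w"] exI[of _ 0]) simp
  next
    case (Cons s xs)
    have "wlen S s \<le> 1" "wlen S (sum_list xs) \<le> length xs"
      using Cons.prems wlen_gen[of s S] wlen_le[of xs S] by auto
    then have "\<sigma> n (sum_list (s # xs)) w = \<sigma> n s (\<sigma> n (sum_list xs) w)"
      using local_copy_mult[of s "sum_list xs"] Cons.prems by simp
    then show ?case using Cons by (simp add: dE_le_step)
  qed
  obtain xs where "length xs = wlen S h" "set xs \<subseteq> S" "sum_list xs = h"
    using wlen_word by blast
  with walk[of xs] h k show ?thesis by (auto intro: dE_le_mono)
qed

lemma ballE_local_copy:
  assumes R: "R < T"
  shows "ballE S V \<sigma> n w R = (\<lambda>a. \<sigma> n a w) ` ballS S R"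
proof
  show "ballE S V \<sigma> n w R \<subseteq> (\<lambda>a. \<sigma> n a w) ` ballS S R"
    using dE_le_imp_word[OF _ R] by (auto simp: ballE_def ballS_def)
  show "(\<lambda>a. \<sigma> n a w) ` ballS S R \<subseteq> ballE S V \<sigma> n w R"
    using dE_le_word R \<sigma>_in[OF local_copy_in] by (auto simp: ballE_def ballS_def)
qed

lemma local_copy_good:
  assumes R: "R < T"
  shows "good S V \<sigma> n R w"
proof -
  define \<psi> where "\<psi> a = \<sigma> n a w" for a
  have inj: "inj_on \<psi> (ballS S R)"
    unfolding inj_on_def \<psi>_def using local_copy_inj R by (auto simp: ballS_def)
  have ball: "ballE S V \<sigma> n w R = \<psi> ` ballS S R"
    unfolding \<psi>_def by (rule ballE_local_copy[OF R])
  define \<phi> where "\<phi> = the_inv_into (ballS S R) \<psi>"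
  have bij: "bij_betw \<phi> (ballE S V \<sigma> n w R) (ballS S R)"
    unfolding \<phi>_def ball using inj by (simp add: bij_betw_the_inv_into inj_on_imp_bij_betw)
  have "\<psi> 0 = w" unfolding \<psi>_def by (rule local_copy_0)
  then have \<phi>0: "\<phi> w = 0"
    unfolding \<phi>_def using the_inv_into_f_f[OF inj] by (force simp: ballS_def)
  have \<phi>: "\<phi> x \<in> ballS S R" "\<psi> (\<phi> x) = x" if "x \<in> ballE S V \<sigma> n w R" for x
    using that ball inj unfolding \<phi>_def by (auto intro: the_inv_into_into f_the_inv_into_f)
  have "y = \<sigma> n s x \<longleftrightarrow> \<phi> y = s + \<phi> x"
    if x: "x \<in> ballE S V \<sigma> n w R" and y: "y \<in> ballE S V \<sigma> n w R" and s: "s \<in> S" for x y s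
  proof -
    have "\<sigma> n s x = \<psi> (s + \<phi> x)"
      using local_copy_mult[of s "\<phi> x"] \<phi>[OF x] wlen_gen[OF s] R by (auto simp: \<psi>_def ballS_def)
    moreover have "wlen S (s + \<phi> x) \<le> T" "wlen S (\<phi> y) \<le> T"
      using wlen_add[of s "\<phi> x"] \<phi>[OF x] \<phi>[OF y] wlen_gen[OF s] R by (auto simp: ballS_def)
    ultimately show ?thesis
      using local_copy_inj[of "\<phi> y" "s + \<phi> x"] \<phi>(2)[OF y] unfolding \<psi>_def by metis
  qed
  then show ?thesis unfolding good_def using local_copy_in bij \<phi>0 by blast
qed

end

lemma mult_free_on_ball_imp_local_copy:
  assumes "mult_free_on_ball S V \<sigma> n T v"
  shows "local_copy S V \<sigma> n T v"
proof -
  have v: "v \<in> V n"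
    and mult: "\<And>h a. wlen S h \<le> 2 * T \<Longrightarrow> wlen S a \<le> 2 * T \<Longrightarrow> \<sigma> n h (\<sigma> n a v) = \<sigma> n (h + a) v"
    and free: "\<And>g. wlen S g \<le> 2 * T \<Longrightarrow> g \<noteq> 0 \<Longrightarrow> \<sigma> n g v \<noteq> v"
    using assms unfolding mult_free_on_ball_def ballS_def by auto
  have "\<sigma> n 0 (\<sigma> n 0 v) = \<sigma> n 0 v" using mult[of 0 0] by simp
  then have \<sigma>0: "\<sigma> n 0 v = v" using \<sigma>_inj[OF \<sigma>_in[OF v] v] by blast
  have "a = b" if ab: "wlen S a \<le> T" "wlen S b \<le> T" "\<sigma> n a v = \<sigma> n b v" for a b
  proof (rule ccontr)
    assume "a \<noteq> b"
    then have "- b + a \<noteq> 0" by (metis add_minus_cancel add.right_neutral)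
    moreover have "wlen S (- b + a) \<le> 2 * T" using wlen_add[of "- b" a] ab by simp
    moreover have "\<sigma> n (- b + a) v = v"
      using mult[of "- b" a] mult[of "- b" b] ab \<sigma>0 by simp
    ultimately show False using free by blast
  qed
  then show ?thesis
    unfolding local_copy_def using v mult by force
qed

end

context word_metric
begin

lemma polymat_banded_restrict:
  assumes band: "\<And>x y. wlen S (x - y) > M \<Longrightarrow> A x y = 0" and p: "degree p \<le> d"
  shows "polymat UNIV A p 0 0 = polymat (ballS S (d * M)) A p 0 0"
proof (rule polymat_restrict_eq[where K = d and L = "\<lambda>k. ballS S ((d - k) * M)"])
  show "z \<in> ballS S ((d - k) * M)"
    if k: "k < d" and x: "x \<in> ballS S ((d - Suc k) * M)" and nz: "A x z \<noteq> 0" for k x z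
  proof -
    have "wlen S (z - x) \<le> M" using band[of x z] nz wlen_diff_commute[of x z] by fastforce
    moreover have "wlen S z \<le> wlen S (z - x) + wlen S x" using wlen_add[of "z - x" x] by simp
    moreover have "(d - k) * M = M + (d - Suc k) * M" using k by (simp add: Suc_diff_Suc[symmetric])
    ultimately show ?thesis using x by (auto simp: ballS_def)
  qed
qed (auto simp: ballS_def p intro: order_trans[OF _ mult_le_mono1[OF diff_le_self]])

end

section \<open>Sofic approximations\<close>

lemma card_filter_not_le_abs:
  assumes "finite A"
  shows "real (card {x\<in>A. \<not> P x}) / real (card A) \<le> \<bar>1 - real (card {x\<in>A. P x}) / real (card A)\<bar>"
proof (cases "card A = 0")
  case False
  have "card {x\<in>A. P x} + card {x\<in>A. \<not> P x} = card A"
    using assms by (subst card_Un_disjoint[symmetric]) (auto intro: arg_cong[where f = card])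
  then have "real (card {x\<in>A. \<not> P x}) / real (card A) = 1 - real (card {x\<in>A. P x}) / real (card A)"
    using False by (simp add: field_simps flip: of_nat_add)
  then show ?thesis by simp
qed simp

lemma density_compl_tendsto_0:
  assumes "\<And>n. finite (A n)"
    and "(\<lambda>n. real (card {x\<in>A n. P n x}) / real (card (A n))) \<longlonglongrightarrow> 1"
  shows "(\<lambda>n. real (card {x\<in>A n. \<not> P n x}) / real (card (A n))) \<longlonglongrightarrow> 0"
proof (rule tendsto_sandwich[OF _ _ tendsto_const])
  have "(\<lambda>n. 1 - real (card {x\<in>A n. P n x}) / real (card (A n))) \<longlonglongrightarrow> 1 - 1"
    by (intro tendsto_diff tendsto_const assms(2))
  then show "(\<lambda>n. \<bar>1 - real (card {x\<in>A n. P n x}) / real (card (A n))\<bar>) \<longlonglongrightarrow> 0"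
    using tendsto_rabs_zero by fastforce
  show "\<forall>\<^sub>F n in sequentially. real (card {x\<in>A n. \<not> P n x}) / real (card (A n))
      \<le> \<bar>1 - real (card {x\<in>A n. P n x}) / real (card (A n))\<bar>"
    by (intro always_eventually allI card_filter_not_le_abs assms(1))
qed simp

locale sofic_approximation = word_metric S for S :: "'g::group_add set" +
  fixes V :: "nat \<Rightarrow> 'v set" and \<sigma> :: "nat \<Rightarrow> 'g \<Rightarrow> 'v \<Rightarrow> 'v"
  assumes sofic: "sofic_approx V \<sigma>"

sublocale sofic_approximation \<subseteq> sofic_action S V \<sigma>
  using sofic by unfold_locales (simp add: sofic_approx_def)

context sofic_approximation
begin

lemma finite_V: "finite (V n)"
  using sofic by (simp add: sofic_approx_def)

lemma eventually_card_V_pos: "\<forall>\<^sub>F n in sequentially. card (V n) > 0"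
proof -
  have "(\<lambda>n. real (card {v\<in>V n. \<sigma> n 0 (\<sigma> n 0 v) = \<sigma> n (0 + 0) v}) / real (card (V n))) \<longlonglongrightarrow> 1"
    using sofic unfolding sofic_approx_def by blast
  then have "\<forall>\<^sub>F n in sequentially. real (card {v\<in>V n. \<sigma> n 0 (\<sigma> n 0 v) = \<sigma> n (0 + 0) v}) / real (card (V n)) > 1 / 2"
    by (rule order_tendstoD) simp
  then show ?thesis by eventually_elim (auto intro: Nat.gr0I)
qed

text \<open>Each of the finitely many conditions in \<open>mult_free_on_ball\<close> fails only on a vanishing
  proportion of vertices.\<close>
lemma density_not_mult_free_tendsto_0:
  "(\<lambda>n. real (card {v\<in>V n. \<not> mult_free_on_ball S V \<sigma> n T v}) / real (card (V n))) \<longlonglongrightarrow> 0"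
proof -
  define B where "B = ballS S (2 * T)"
  define E1 where "E1 n q = {v\<in>V n. \<not> \<sigma> n (fst q) (\<sigma> n (snd q) v) = \<sigma> n (fst q + snd q) v}" for n q
  define E2 where "E2 n g = {v\<in>V n. \<not> \<sigma> n g v \<noteq> v}" for n g
  define ratio where "ratio n X = real (card X) / real (card (V n))" for n and X :: "'v set"
  have E1: "(\<lambda>n. ratio n (E1 n q)) \<longlonglongrightarrow> 0" for q
    unfolding E1_def ratio_def
    by (rule density_compl_tendsto_0[OF finite_V]) (use sofic in \<open>simp add: sofic_approx_def\<close>)
  have E2: "(\<lambda>n. ratio n (E2 n g)) \<longlonglongrightarrow> 0" if "g \<noteq> 0" for g
    unfolding E2_def ratio_def
    by (rule density_compl_tendsto_0[OF finite_V]) (use sofic that in \<open>simp add: sofic_approx_def\<close>)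
  have bad: "{v\<in>V n. \<not> mult_free_on_ball S V \<sigma> n T v} \<subseteq> (\<Union>q\<in>B \<times> B. E1 n q) \<union> (\<Union>g\<in>B - {0}. E2 n g)" for n
    unfolding mult_free_on_ball_def B_def E1_def E2_def by auto
  have le: "ratio n {v\<in>V n. \<not> mult_free_on_ball S V \<sigma> n T v}
      \<le> (\<Sum>q\<in>B \<times> B. ratio n (E1 n q)) + (\<Sum>g\<in>B - {0}. ratio n (E2 n g))" for n
  proof -
    have "card {v\<in>V n. \<not> mult_free_on_ball S V \<sigma> n T v} \<le> card ((\<Union>q\<in>B \<times> B. E1 n q) \<union> (\<Union>g\<in>B - {0}. E2 n g))"
      by (rule card_mono[OF finite_subset[OF _ finite_V] bad]) (auto simp: E1_def E2_def)
    also have "\<dots> \<le> (\<Sum>q\<in>B \<times> B. card (E1 n q)) + (\<Sum>g\<in>B - {0}. card (E2 n g))"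
      by (intro order_trans[OF card_Un_le] add_mono card_UN_le) (simp_all add: B_def finite_ballS)
    finally have "real (card {v\<in>V n. \<not> mult_free_on_ball S V \<sigma> n T v})
        \<le> (\<Sum>q\<in>B \<times> B. real (card (E1 n q))) + (\<Sum>g\<in>B - {0}. real (card (E2 n g)))"
      by (simp only: of_nat_sum[symmetric] of_nat_add[symmetric] of_nat_le_iff)
    then have "ratio n {v\<in>V n. \<not> mult_free_on_ball S V \<sigma> n T v}
        \<le> ((\<Sum>q\<in>B \<times> B. real (card (E1 n q))) + (\<Sum>g\<in>B - {0}. real (card (E2 n g)))) / real (card (V n))"
      unfolding ratio_def by (rule divide_right_mono) simp
    also have "\<dots> = (\<Sum>q\<in>B \<times> B. ratio n (E1 n q)) + (\<Sum>g\<in>B - {0}. ratio n (E2 n g))"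
      unfolding ratio_def by (simp only: add_divide_distrib sum_divide_distrib)
    finally show ?thesis .
  qed
  have "(\<lambda>n. ratio n {v\<in>V n. \<not> mult_free_on_ball S V \<sigma> n T v}) \<longlonglongrightarrow> 0"
  proof (rule tendsto_sandwich[OF _ _ tendsto_const])
    show "\<forall>\<^sub>F n in sequentially. 0 \<le> ratio n {v\<in>V n. \<not> mult_free_on_ball S V \<sigma> n T v}"
      by (simp add: ratio_def)
    show "\<forall>\<^sub>F n in sequentially. ratio n {v\<in>V n. \<not> mult_free_on_ball S V \<sigma> n T v}
        \<le> (\<Sum>q\<in>B \<times> B. ratio n (E1 n q)) + (\<Sum>g\<in>B - {0}. ratio n (E2 n g))"
      using le by simp
    have "(\<lambda>n. (\<Sum>q\<in>B \<times> B. ratio n (E1 n q)) + (\<Sum>g\<in>B - {0}. ratio n (E2 n g))) \<longlonglongrightarrow> 0 + 0"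
      by (intro tendsto_add tendsto_null_sum E1 E2) auto
    then show "(\<lambda>n. (\<Sum>q\<in>B \<times> B. ratio n (E1 n q)) + (\<Sum>g\<in>B - {0}. ratio n (E2 n g))) \<longlonglongrightarrow> 0"
      by simp
  qed
  then show ?thesis by (simp add: ratio_def)
qed

end

section \<open>Induced approximations\<close>

lemma compact_UNIV_fun:
  assumes "compact (UNIV :: 'x::topological_space set)"
  shows "compact (UNIV :: ('g \<Rightarrow> 'x) set)"
proof -
  have "compact_space (euclidean :: 'x topology)" using assms by (simp add: compact_space_def)
  then have "compact_space (product_topology (\<lambda>_::'g. (euclidean :: 'x topology)) UNIV)"
    by (simp add: compact_space_product_topology)
  then show ?thesis by (simp add: euclidean_product_topology compact_space_def)
qed

locale induced_approximation = sofic_approximation S V \<sigma>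
  for S :: "'g::group_add set" and V :: "nat \<Rightarrow> 'v set" and \<sigma> :: "nat \<Rightarrow> 'g \<Rightarrow> 'v \<Rightarrow> 'v" +
  fixes M :: nat and H :: "('g \<Rightarrow> 'x::metric_space) \<Rightarrow> 'g \<Rightarrow> 'g \<Rightarrow> complex"
    and Hn :: "nat \<Rightarrow> ('v \<Rightarrow> 'x) \<Rightarrow> 'v \<Rightarrow> 'v \<Rightarrow> complex"
  assumes compact_X: "compact (UNIV :: 'x set)"
    and continuous_H: "continuous_operator S M H"
    and hom_or_bounded_interaction:
      "(\<forall>n g h. \<forall>v\<in>V n. \<sigma> n (g + h) v = \<sigma> n g (\<sigma> n h v)) \<or> bounded_interaction S M H"
    and induced: "induced_approx S V \<sigma> M H Hn"
begin

lemma H_band: "wlen S (x - y) > M \<Longrightarrow> H \<omega> x y = 0"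
  using continuous_H unfolding continuous_operator_def by blast

lemma H_shift: "H \<omega> (x + g) (y + g) = H (shift g \<omega>) x y"
  using continuous_H unfolding continuous_operator_def by blast

lemma H_hermitian: "hermitian_on J (H \<omega>)"
  using continuous_H unfolding continuous_operator_def hermitian_on_def by blast

text \<open>Translation invariance reduces all entries to the finitely many continuous functions
  \<open>\<omega> \<mapsto> H \<omega> 0 c\<close>, \<open>c \<in> ballS S M\<close>, on the compact space of configurations.\<close>
lemma H_bounded: "\<exists>B\<ge>0. \<forall>\<omega> a b. cmod (H \<omega> a b) \<le> B"
proof -
  have "\<exists>Bc. \<forall>\<omega>. cmod (H \<omega> 0 c) \<le> Bc" for c
  proof -
    have "continuous_on UNIV (\<lambda>\<omega>. H \<omega> 0 c)"
      using continuous_H unfolding continuous_operator_def by blast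
    then have "compact (range (\<lambda>\<omega>. H \<omega> 0 c))"
      by (rule compact_continuous_image[OF _ compact_UNIV_fun[OF compact_X]])
    then show ?thesis by (auto dest!: compact_imp_bounded simp: bounded_iff)
  qed
  then obtain Bc where Bc: "\<And>c \<omega>. cmod (H \<omega> 0 c) \<le> Bc c" by metis
  define B where "B = (\<Sum>c\<in>ballS S M. \<bar>Bc c\<bar>)"
  have "cmod (H \<omega> a b) \<le> B" for \<omega> a b
  proof (cases "wlen S (b - a) \<le> M")
    case True
    have "H \<omega> a b = H (shift a \<omega>) 0 (b - a)"
      using H_shift[where x = 0 and g = a and y = "b - a"] by simp
    then have "cmod (H \<omega> a b) \<le> Bc (b - a)" using Bc[where c = "b - a"] by simp
    also have "\<dots> \<le> \<bar>Bc (b - a)\<bar>" by simp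
    also have "\<dots> \<le> B" unfolding B_def using True finite_ballS
      by (intro member_le_sum) (auto simp: ballS_def)
    finally show ?thesis .
  next
    case False
    then show ?thesis
      using H_band[of a b] wlen_diff_commute[of a b] by (simp add: B_def sum_nonneg)
  qed
  moreover have "B \<ge> 0" unfolding B_def by (simp add: sum_nonneg)
  ultimately show ?thesis by blast
qed

lemma H_polymat_entry_bounded:
  assumes B: "B \<ge> 0" "\<And>\<omega> a b. cmod (H \<omega> a b) \<le> B" and D: "card (ballS S M) \<le> D"
  shows "polymat_entry_bounded UNIV (H \<omega>) 0 0 (B * real D)"
  unfolding polymat_entry_bounded_def
proof (intro allI impI)
  fix p :: "real poly" and \<epsilon> :: real
  assume p: "\<forall>t. \<bar>t\<bar> \<le> B * real D \<longrightarrow> \<bar>poly p t\<bar> \<le> \<epsilon>"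
  let ?J = "ballS S (degree p * M)"
  have support: "{z\<in>?J. H \<omega> x z \<noteq> 0 \<or> H \<omega> z x \<noteq> 0} \<subseteq> (\<lambda>c. c + x) ` ballS S M" for x
  proof
    fix z assume "z \<in> {z\<in>?J. H \<omega> x z \<noteq> 0 \<or> H \<omega> z x \<noteq> 0}"
    then have "wlen S (z - x) \<le> M"
      using H_band[of x z \<omega>] H_band[of z x \<omega>] wlen_diff_commute[of x z] by force
    then show "z \<in> (\<lambda>c. c + x) ` ballS S M"
      by (intro image_eqI[of _ _ "z - x"]) (auto simp: ballS_def)
  qed
  have count: "card {z\<in>?J. H \<omega> x z \<noteq> 0 \<or> H \<omega> z x \<noteq> 0} \<le> D" for x
    using card_mono[OF finite_imageI[OF finite_ballS] support[of x]] card_image_le[OF finite_ballS, of "\<lambda>c. c + x" M] D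
    by linarith
  have row: "card {z\<in>?J. H \<omega> x z \<noteq> 0} \<le> D" and col: "card {z\<in>?J. H \<omega> z x \<noteq> 0} \<le> D" for x
    by (rule order_trans[OF card_mono count], use finite_ballS in auto)+
  have norm: "op_norm_le ?J (H \<omega>) (B * real D)"
    by (rule schur_op_norm_le[OF finite_ballS B(1) B(2) row col])
  have "cmod (polymat ?J (H \<omega>) p 0 0) \<le> \<epsilon>"
    by (rule hermitian_polymat_entry_le[OF finite_ballS H_hermitian norm]) (use p B in \<open>auto simp: ballS_def\<close>)
  then show "cmod (polymat UNIV (H \<omega>) p 0 0) \<le> \<epsilon>"
    using polymat_banded_restrict[OF H_band order_refl] by simp
qed

context
  fixes n :: nat and \<rho> :: "'v \<Rightarrow> 'x"
  assumes \<rho>: "\<rho> \<in> PiE (V n) (\<lambda>_. UNIV)"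
begin

lemma induced_approx_at:
  "(\<forall>x\<in>V n. \<forall>y\<in>V n. Hn n \<rho> x y = cnj (Hn n \<rho> y x)) \<and>
   (\<forall>x\<in>V n. \<forall>y\<in>V n. \<not> dE_le S V \<sigma> n x y M \<longrightarrow> Hn n \<rho> x y = 0) \<and>
   (\<forall>w u g. good S V \<sigma> n (4 * M) w \<and> u \<in> ballE S V \<sigma> n w M \<and> g \<in> ballS S M \<and> \<sigma> n g w = u
      \<longrightarrow> Hn n \<rho> w u = H (Pi_sh \<sigma> n w \<rho>) 0 g) \<and>
   (\<forall>x\<in>V n. \<forall>y\<in>V n. Hn n \<rho> x y \<in> {H \<omega> a b | \<omega> a b. True} \<union> {0})"
  using induced[unfolded induced_approx_def, THEN spec[of _ n], THEN conjunct2] \<rho> by (rule bspec)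

lemma Hn_hermitian: "hermitian_on (V n) (Hn n \<rho>)"
  using induced_approx_at unfolding hermitian_on_def by (elim conjE)

lemma Hn_nonzero_imp_dE_le: "x \<in> V n \<Longrightarrow> y \<in> V n \<Longrightarrow> Hn n \<rho> x y \<noteq> 0 \<Longrightarrow> dE_le S V \<sigma> n x y M"
  using induced_approx_at by blast

lemma Hn_good_entry:
  "good S V \<sigma> n (4 * M) w \<Longrightarrow> u \<in> ballE S V \<sigma> n w M \<Longrightarrow> g \<in> ballS S M \<Longrightarrow> \<sigma> n g w = u
    \<Longrightarrow> Hn n \<rho> w u = H (Pi_sh \<sigma> n w \<rho>) 0 g"
  using induced_approx_at by blast

lemma Hn_entry_le:
  assumes "\<And>\<omega> a b. cmod (H \<omega> a b) \<le> B" "B \<ge> 0" "x \<in> V n" "y \<in> V n"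
  shows "cmod (Hn n \<rho> x y) \<le> B"
proof -
  have "Hn n \<rho> x y \<in> {H \<omega> a b | \<omega> a b. True} \<union> {0}"
    using induced_approx_at assms(3,4) by blast
  then show ?thesis using assms(1,2) by auto
qed

lemma Hn_polymat_entry_bounded:
  assumes B: "B \<ge> 0" "\<And>\<omega> a b. cmod (H \<omega> a b) \<le> B"
    and D: "card {ls :: ('g \<times> bool) list. set ls \<subseteq> S \<times> UNIV \<and> length ls \<le> M} \<le> D"
    and v: "v \<in> V n"
  shows "polymat_entry_bounded (V n) (Hn n \<rho>) v v (B * real D)"
proof (rule hermitian_polymat_entry_bounded[OF finite_V Hn_hermitian _ _ v v])
  have row: "card {y\<in>V n. Hn n \<rho> x y \<noteq> 0} \<le> D" if "x \<in> V n" for x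
  proof -
    have "card {y\<in>V n. Hn n \<rho> x y \<noteq> 0} \<le> card {y\<in>V n. dE_le S V \<sigma> n x y M}"
      using that Hn_nonzero_imp_dE_le by (intro card_mono) (auto simp: finite_V)
    then show ?thesis using card_dE_ball_le[of n x M] D by linarith
  qed
  have "{x\<in>V n. Hn n \<rho> x y \<noteq> 0} = {x\<in>V n. Hn n \<rho> y x \<noteq> 0}" if "y \<in> V n" for y
    using hermitian_onD[OF Hn_hermitian _ that] by force
  then show "op_norm_le (V n) (Hn n \<rho>) (B * real D)"
    using row by (intro schur_op_norm_le[OF finite_V B(1)] Hn_entry_le B) auto
qed (use B in simp)

context
  fixes v T assumes copy: "local_copy S V \<sigma> n T v"
begin

lemma H_Pi_sh_local_copy:
  assumes a: "wlen S a + M \<le> T"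
  shows "H (Pi_sh \<sigma> n (\<sigma> n a v) \<rho>) 0 h = H (shift a (Pi_sh \<sigma> n v \<rho>)) 0 h"
  using hom_or_bounded_interaction
proof
  assume "\<forall>n g h. \<forall>v\<in>V n. \<sigma> n (g + h) v = \<sigma> n g (\<sigma> n h v)"
  then have "Pi_sh \<sigma> n (\<sigma> n a v) \<rho> = shift a (Pi_sh \<sigma> n v \<rho>)"
    using local_copy_in[OF copy] by (simp add: Pi_sh_def shift_def fun_eq_iff)
  then show ?thesis by simp
next
  \<comment> \<open>otherwise both configurations agree on \<open>ballS S M\<close>, which is all that \<open>H _ 0 _\<close> sees\<close>
  assume "bounded_interaction S M H"
  moreover have "Pi_sh \<sigma> n (\<sigma> n a v) \<rho> k = shift a (Pi_sh \<sigma> n v \<rho>) k" if "k \<in> ballS S M" for k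
    using local_copy_mult[OF copy, of k a] that a by (simp add: Pi_sh_def shift_def ballS_def)
  ultimately show ?thesis unfolding bounded_interaction_def by blast
qed

lemma Hn_local_copy_entry:
  assumes T: "R + 4 * M + 2 \<le> T" and a: "wlen S a \<le> R" and b: "wlen S b \<le> R"
  shows "Hn n \<rho> (\<sigma> n a v) (\<sigma> n b v) = H (Pi_sh \<sigma> n v \<rho>) a b"
proof -
  have v: "v \<in> V n" by (rule local_copy_in[OF copy])
  have copy_a: "local_copy S V \<sigma> n (4 * M + 2) (\<sigma> n a v)"
    using a T by (intro local_copy_shift[OF copy]) simp
  show ?thesis
  proof (cases "wlen S (b - a) \<le> M")
    case True
    have shift: "\<sigma> n (b - a) (\<sigma> n a v) = \<sigma> n b v"
      using local_copy_mult[OF copy, of "b - a" a] True a T by simp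
    have "Hn n \<rho> (\<sigma> n a v) (\<sigma> n b v) = H (Pi_sh \<sigma> n (\<sigma> n a v) \<rho>) 0 (b - a)"
    proof (rule Hn_good_entry[OF _ _ _ shift])
      show "good S V \<sigma> n (4 * M) (\<sigma> n a v)" by (rule local_copy_good[OF copy_a]) simp
      show "\<sigma> n b v \<in> ballE S V \<sigma> n (\<sigma> n a v) M"
        using dE_le_word[OF copy_a True] shift \<sigma>_in[OF v] by (simp add: ballE_def)
      show "b - a \<in> ballS S M" using True by (simp add: ballS_def)
    qed
    also have "\<dots> = H (shift a (Pi_sh \<sigma> n v \<rho>)) 0 (b - a)"
      using a T by (intro H_Pi_sh_local_copy) simp
    also have "\<dots> = H (Pi_sh \<sigma> n v \<rho>) a b"
      using H_shift[where x = 0 and g = a and y = "b - a"] by simp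
    finally show ?thesis .
  next
    case False
    have "Hn n \<rho> (\<sigma> n a v) (\<sigma> n b v) = 0"
    proof (rule ccontr)
      assume "Hn n \<rho> (\<sigma> n a v) (\<sigma> n b v) \<noteq> 0"
      then have "dE_le S V \<sigma> n (\<sigma> n a v) (\<sigma> n b v) M"
        using \<sigma>_in[OF v] by (intro Hn_nonzero_imp_dE_le)
      then obtain h where h: "wlen S h \<le> M" "\<sigma> n b v = \<sigma> n h (\<sigma> n a v)"
        using dE_le_imp_word[OF copy_a] by fastforce
      then have "\<sigma> n b v = \<sigma> n (h + a) v"
        using local_copy_mult[OF copy, of h a] a T by simp
      then have "b = h + a"
        using local_copy_inj[OF copy, of b "h + a"] wlen_add[of h a] h a b T by simp
      with h False show False by simp
    qed
    moreover have "H (Pi_sh \<sigma> n v \<rho>) a b = 0"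
      using H_band[of a b] False wlen_diff_commute[of a b] by simp
    ultimately show ?thesis by simp
  qed
qed

lemma polymat_Hn_local_copy_restrict:
  assumes p: "degree p \<le> d" and T: "d * M + 4 * M + 2 \<le> T"
  shows "polymat (V n) (Hn n \<rho>) p v v = polymat ((\<lambda>a. \<sigma> n a v) ` ballS S (d * M)) (Hn n \<rho>) p v v"
proof (rule polymat_restrict_eq[where K = d and L = "\<lambda>k. (\<lambda>a. \<sigma> n a v) ` ballS S ((d - k) * M)"])
  have v: "v \<in> V n" by (rule local_copy_in[OF copy])
  show "z \<in> (\<lambda>a. \<sigma> n a v) ` ballS S ((d - k) * M)"
    if k: "k < d" and x: "x \<in> (\<lambda>a. \<sigma> n a v) ` ballS S ((d - Suc k) * M)" and z: "z \<in> V n"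
      and nz: "Hn n \<rho> x z \<noteq> 0" for k x z
  proof -
    obtain a where a: "wlen S a \<le> (d - Suc k) * M" "x = \<sigma> n a v"
      using x by (auto simp: ballS_def)
    have wa: "wlen S a \<le> d * M"
      using a(1) by (meson diff_le_self mult_le_mono1 order_trans)
    have "dE_le S V \<sigma> n x z M"
      using Hn_nonzero_imp_dE_le[OF _ z nz] a(2) \<sigma>_in[OF v] by simp
    then obtain h where h: "wlen S h \<le> M" "z = \<sigma> n h x"
      using dE_le_imp_word[OF local_copy_shift[OF copy, of a "4 * M + 2"]] a(2) wa T by fastforce
    then have "z = \<sigma> n (h + a) v"
      using local_copy_mult[OF copy, of h a] a(2) wa T by simp
    moreover have "(d - k) * M = M + (d - Suc k) * M" using k by (simp add: Suc_diff_Suc[symmetric])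
    then have "wlen S (h + a) \<le> (d - k) * M" using wlen_add[of h a] h a(1) by linarith
    ultimately show ?thesis by (auto simp: ballS_def)
  qed
  show "(\<lambda>a. \<sigma> n a v) ` ballS S (d * M) \<subseteq> V n" using \<sigma>_in[OF v] by auto
  show "(\<lambda>a. \<sigma> n a v) ` ballS S ((d - k) * M) \<subseteq> (\<lambda>a. \<sigma> n a v) ` ballS S (d * M)" for k
    by (intro image_mono ballS_mono) simp
  show "v \<in> (\<lambda>a. \<sigma> n a v) ` ballS S ((d - k) * M)" for k
    using local_copy_0[OF copy] by (intro image_eqI[of _ _ 0]) (auto simp: ballS_def)
  then show "v \<in> (\<lambda>a. \<sigma> n a v) ` ballS S (d * M)" by (metis diff_zero)
qed (rule p)

lemma polymat_Hn_local_copy_eq: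
  assumes p: "degree p \<le> d" and T: "d * M + 4 * M + 2 \<le> T"
  shows "polymat (V n) (Hn n \<rho>) p v v = polymat UNIV (H (Pi_sh \<sigma> n v \<rho>)) p 0 0"
proof -
  define \<psi> where "\<psi> a = \<sigma> n a v" for a
  define J where "J = ballS S (d * M)"
  have J0: "0 \<in> J" by (simp add: J_def ballS_def)
  have "inj_on \<psi> J"
    using local_copy_inj[OF copy] T unfolding inj_on_def \<psi>_def J_def ballS_def by force
  then have bij: "bij_betw \<psi> J (\<psi> ` J)" by (rule inj_on_imp_bij_betw)
  have "polymat (V n) (Hn n \<rho>) p v v = polymat (\<psi> ` J) (Hn n \<rho>) p (\<psi> 0) (\<psi> 0)"
    using polymat_Hn_local_copy_restrict[OF p T] local_copy_0[OF copy] by (simp add: \<psi>_def J_def)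
  also have "\<dots> = polymat J (H (Pi_sh \<sigma> n v \<rho>)) p 0 0"
  proof (rule polymat_reindex[OF _ bij _ J0 J0])
    show "finite J" unfolding J_def by (rule finite_ballS)
    show "Hn n \<rho> (\<psi> a) (\<psi> b) = H (Pi_sh \<sigma> n v \<rho>) a b" if "a \<in> J" "b \<in> J" for a b
      using that Hn_local_copy_entry[OF T] by (simp add: J_def ballS_def \<psi>_def)
  qed
  also have "\<dots> = polymat UNIV (H (Pi_sh \<sigma> n v \<rho>)) p 0 0"
    unfolding J_def by (rule polymat_banded_restrict[OF H_band p, symmetric])
  finally show ?thesis .
qed

end

end

end

lemma norm_average_le:
  assumes A: "finite A" "A \<noteq> {}" and t: "\<And>v. v \<in> A \<Longrightarrow> cmod (t v) \<le> a + (if P v then 0 else C)"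
  shows "cmod ((\<Sum>v\<in>A. t v) / of_nat (card A)) \<le> a + C * (real (card {v\<in>A. \<not> P v}) / real (card A))"
proof -
  have cA: "real (card A) > 0" using A by (simp add: card_gt_0_iff)
  have "(\<Sum>v\<in>A. if P v then 0 else C) = (\<Sum>v\<in>A. if \<not> P v then C else 0)"
    by (rule sum.cong) auto
  also have "\<dots> = C * real (card {v\<in>A. \<not> P v})"
    using sum.inter_filter[OF A(1), of "\<lambda>_. C" "\<lambda>v. \<not> P v"] by (simp add: mult.commute)
  finally have bad: "(\<Sum>v\<in>A. if P v then 0 else C) = C * real (card {v\<in>A. \<not> P v})" .
  have "cmod (\<Sum>v\<in>A. t v) \<le> (\<Sum>v\<in>A. a + (if P v then 0 else C))"
    by (rule order_trans[OF norm_sum sum_mono[OF t]])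
  also have "\<dots> = a * real (card A) + C * real (card {v\<in>A. \<not> P v})"
    by (simp only: sum.distrib bad) simp
  finally have "cmod (\<Sum>v\<in>A. t v) / real (card A) \<le> (a * real (card A) + C * real (card {v\<in>A. \<not> P v})) / real (card A)"
    using cA by (simp add: divide_right_mono)
  then show ?thesis
    using cA by (simp add: norm_divide add_divide_distrib)
qed

lemma SUP_ereal_tendsto_0:
  fixes Q :: "nat \<Rightarrow> 'a \<Rightarrow> real"
  assumes ne: "\<And>n. A n \<noteq> {}" and nonneg: "\<And>n x. 0 \<le> Q n x"
    and small: "\<And>e. e > 0 \<Longrightarrow> \<forall>\<^sub>F n in sequentially. \<forall>x\<in>A n. Q n x \<le> e"
  shows "(\<lambda>n. SUP x\<in>A n. ereal (Q n x)) \<longlonglongrightarrow> 0"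
proof (rule order_tendstoI)
  fix a :: ereal assume "a < 0"
  have "a < (SUP x\<in>A n. ereal (Q n x))" for n
  proof -
    obtain x where "x \<in> A n" using ne by blast
    have "a < ereal (Q n x)" using \<open>a < 0\<close> nonneg[of n x] by (simp add: less_le_trans)
    also have "\<dots> \<le> (SUP x\<in>A n. ereal (Q n x))" using \<open>x \<in> A n\<close> by (rule SUP_upper)
    finally show ?thesis .
  qed
  then show "\<forall>\<^sub>F n in sequentially. a < (SUP x\<in>A n. ereal (Q n x))" by simp
next
  fix a :: ereal assume "a > 0"
  then obtain z where z: "0 < ereal z" "ereal z < a" using ereal_dense2 by blast
  have "\<forall>\<^sub>F n in sequentially. \<forall>x\<in>A n. Q n x \<le> z / 2"
    using z(1) by (intro small) simp
  then show "\<forall>\<^sub>F n in sequentially. (SUP x\<in>A n. ereal (Q n x)) < a"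
  proof eventually_elim
    case (elim n)
    have "(SUP x\<in>A n. ereal (Q n x)) \<le> ereal (z / 2)" using elim by (intro SUP_least) simp
    also have "\<dots> < ereal z" using z(1) by simp
    also have "\<dots> < a" by (rule z(2))
    finally show ?case .
  qed
qed

context induced_approximation
begin

lemma exists_polymat_entry_bound:
  "\<exists>r\<ge>0. (\<forall>\<omega>. polymat_entry_bounded UNIV (H \<omega>) 0 0 r) \<and>
     (\<forall>n \<rho> v. \<rho> \<in> PiE (V n) (\<lambda>_. UNIV) \<longrightarrow> v \<in> V n \<longrightarrow> polymat_entry_bounded (V n) (Hn n \<rho>) v v r)"
proof -
  obtain B where B: "B \<ge> 0" "\<And>\<omega> a b. cmod (H \<omega> a b) \<le> B" using H_bounded by blast
  define D where "D = max (card (ballS S M)) (card {ls :: ('g \<times> bool) list. set ls \<subseteq> S \<times> UNIV \<and> length ls \<le> M})"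
  have "polymat_entry_bounded UNIV (H \<omega>) 0 0 (B * real D)" for \<omega>
    by (rule H_polymat_entry_bounded[OF B]) (simp add: D_def)
  moreover have "polymat_entry_bounded (V n) (Hn n \<rho>) v v (B * real D)"
    if "\<rho> \<in> PiE (V n) (\<lambda>_. UNIV)" "v \<in> V n" for n \<rho> v
    by (rule Hn_polymat_entry_bounded[OF that(1) B _ that(2)]) (simp add: D_def)
  ultimately show ?thesis using B(1) by (intro exI[of _ "B * real D"]) auto
qed

lemma fcalc_deviation_le:
  fixes f :: "real \<Rightarrow> real"
  assumes bG: "polymat_entry_bounded UNIV (H (Pi_sh \<sigma> n v \<rho>)) 0 0 r"
    and bV: "polymat_entry_bounded (V n) (Hn n \<rho>) v v r"
    and f: "continuous_on UNIV f"
    and pf: "\<And>t. \<bar>t\<bar> \<le> r \<Longrightarrow> \<bar>poly p t - f t\<bar> \<le> \<epsilon>" and pC: "\<And>t. \<bar>t\<bar> \<le> r \<Longrightarrow> \<bar>poly p t\<bar> \<le> C"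
    and \<rho>: "\<rho> \<in> PiE (V n) (\<lambda>_. UNIV)" and T: "degree p * M + 4 * M + 2 \<le> T"
  shows "cmod (fcalc (V n) (Hn n \<rho>) f v v - fcalc UNIV (H (Pi_sh \<sigma> n v \<rho>)) f 0 0)
    \<le> 2 * \<epsilon> + (if mult_free_on_ball S V \<sigma> n T v then 0 else 2 * C)"
proof -
  let ?fV = "fcalc (V n) (Hn n \<rho>) f v v" and ?fG = "fcalc UNIV (H (Pi_sh \<sigma> n v \<rho>)) f 0 0"
  let ?pV = "polymat (V n) (Hn n \<rho>) p v v" and ?pG = "polymat UNIV (H (Pi_sh \<sigma> n v \<rho>)) p 0 0"
  have "cmod (?pV - ?pG) \<le> (if mult_free_on_ball S V \<sigma> n T v then 0 else 2 * C)"
  proof (cases "mult_free_on_ball S V \<sigma> n T v")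
    case True
    then have "?pV = ?pG"
      using polymat_Hn_local_copy_eq[OF \<rho> mult_free_on_ball_imp_local_copy order_refl T] by simp
    then show ?thesis using True by simp
  next
    case False
    have "cmod (?pV - ?pG) \<le> cmod ?pV + cmod ?pG" by (rule norm_triangle_ineq4)
    also have "\<dots> \<le> C + C"
      using polymat_entry_boundedD[OF bV pC] polymat_entry_boundedD[OF bG pC] by (rule add_mono)
    finally show ?thesis using False by simp
  qed
  moreover have "cmod (?fV - ?pV) \<le> \<epsilon>" by (rule fcalc_approx[OF bV f pf])
  moreover have "cmod (?fG - ?pG) \<le> \<epsilon>" by (rule fcalc_approx[OF bG f pf])
  moreover have "cmod (?fV - ?fG) \<le> cmod (?fV - ?pV) + cmod (?pV - ?pG) + cmod (?fG - ?pG)"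
    using norm_triangle_ineq4[of "(?fV - ?pV) + (?pV - ?pG)" "?fG - ?pG"]
      norm_triangle_ineq[of "?fV - ?pV" "?pV - ?pG"] by simp
  ultimately show ?thesis by linarith
qed

lemma eventually_average_deviation_le:
  fixes f :: "real \<Rightarrow> real"
  assumes f: "continuous_on UNIV f" and e: "e > 0"
  shows "\<forall>\<^sub>F n in sequentially. \<forall>\<rho>\<in>PiE (V n) (\<lambda>_. UNIV).
    cmod ((\<Sum>v\<in>V n. fcalc (V n) (Hn n \<rho>) f v v - fcalc UNIV (H (Pi_sh \<sigma> n v \<rho>)) f 0 0)
          / of_nat (card (V n))) \<le> e"
proof -
  obtain r where r: "r \<ge> 0" "\<And>\<omega>. polymat_entry_bounded UNIV (H \<omega>) 0 0 r"
    "\<And>n \<rho> v. \<rho> \<in> PiE (V n) (\<lambda>_. UNIV) \<Longrightarrow> v \<in> V n \<Longrightarrow> polymat_entry_bounded (V n) (Hn n \<rho>) v v r"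
    using exists_polymat_entry_bound by blast
  obtain Fb where Fb: "\<And>t. \<bar>t\<bar> \<le> r \<Longrightarrow> \<bar>f t\<bar> \<le> Fb"
  proof -
    have "compact (f ` {-r..r})"
      by (rule compact_continuous_image[OF continuous_on_subset[OF f]]) auto
    then show ?thesis using that by (force dest!: compact_imp_bounded simp: bounded_iff abs_le_iff)
  qed
  obtain p where p: "\<forall>t. \<bar>t\<bar> \<le> r \<longrightarrow> \<bar>poly p t - f t\<bar> < e / 3"
    using exists_poly_approx[OF f, of "e / 3"] e by auto
  define C where "C = Fb + e / 3"
  define T where "T = degree p * M + 4 * M + 2"
  have pf: "\<bar>poly p t - f t\<bar> \<le> e / 3" if "\<bar>t\<bar> \<le> r" for t
    using p that by (simp add: less_imp_le)
  have pC: "\<bar>poly p t\<bar> \<le> C" if "\<bar>t\<bar> \<le> r" for t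
    using pf[OF that] Fb[OF that] unfolding C_def by arith
  have C: "C \<ge> 0" using pC[of 0] r(1) by simp
  have "\<forall>\<^sub>F n in sequentially. real (card {v\<in>V n. \<not> mult_free_on_ball S V \<sigma> n T v}) / real (card (V n))
      < (e / 3) / (2 * C + 1)"
    using C e by (intro order_tendstoD(2)[OF density_not_mult_free_tendsto_0]) simp
  with eventually_card_V_pos show ?thesis
  proof eventually_elim
    case (elim n)
    show ?case
    proof
      fix \<rho> assume \<rho>: "\<rho> \<in> PiE (V n) (\<lambda>_. UNIV :: 'x set)"
      let ?d = "real (card {v\<in>V n. \<not> mult_free_on_ball S V \<sigma> n T v}) / real (card (V n))"
      have "cmod ((\<Sum>v\<in>V n. fcalc (V n) (Hn n \<rho>) f v v - fcalc UNIV (H (Pi_sh \<sigma> n v \<rho>)) f 0 0)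
          / of_nat (card (V n))) \<le> 2 * (e / 3) + 2 * C * ?d"
        using elim(1) by (intro norm_average_le finite_V fcalc_deviation_le[OF r(2) r(3)[OF \<rho>] f pf pC \<rho>])
          (auto simp: T_def)
      also have "\<dots> \<le> 2 * (e / 3) + 2 * C * ((e / 3) / (2 * C + 1))"
        using elim(2) C by (intro add_left_mono mult_left_mono) auto
      also have "\<dots> \<le> e"
        using C e by (simp add: field_simps)
      finally show "cmod ((\<Sum>v\<in>V n. fcalc (V n) (Hn n \<rho>) f v v - fcalc UNIV (H (Pi_sh \<sigma> n v \<rho>)) f 0 0)
          / of_nat (card (V n))) \<le> e" .
    qed
  qed
qed

end

theorem mainTheorem17:
  fixes S :: "'g::group_add set"
    and V :: "nat \<Rightarrow> 'v set"
    and \<sigma> :: "nat \<Rightarrow> 'g \<Rightarrow> 'v \<Rightarrow> 'v"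
    and M :: nat
    and H :: "('g \<Rightarrow> 'x::metric_space) \<Rightarrow> 'g \<Rightarrow> 'g \<Rightarrow> complex"
    and Hn :: "nat \<Rightarrow> ('v \<Rightarrow> 'x) \<Rightarrow> 'v \<Rightarrow> 'v \<Rightarrow> complex"
    and f :: "real \<Rightarrow> real"
  assumes "finite S" and "\<forall>s\<in>S. - s \<in> S" and "0 \<notin> S" and "generates S"
    and "compact (UNIV :: 'x set)"
    and "sofic_approx V \<sigma>"
    and "continuous_operator S M H"
    and "(\<forall>n g h. \<forall>v\<in>V n. \<sigma> n (g + h) v = \<sigma> n g (\<sigma> n h v)) \<or> bounded_interaction S M H"
    and "induced_approx S V \<sigma> M H Hn"
    and "continuous_on UNIV f"
  shows "(\<lambda>n. SUP \<rho>\<in>PiE (V n) (\<lambda>_. UNIV).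
            ereal (cmod ((\<Sum>v\<in>V n. fcalc (V n) (Hn n \<rho>) f v v
                                    - fcalc UNIV (H (Pi_sh \<sigma> n v \<rho>)) f 0 0)
                         / of_nat (card (V n))))) \<longlonglongrightarrow> 0"
proof -
  interpret induced_approximation S V \<sigma> M H Hn
    by unfold_locales (rule assms)+
  show ?thesis
    by (rule SUP_ereal_tendsto_0) (simp_all add: PiE_eq_empty_iff eventually_average_deviation_le[OF assms(10)])
qed

end
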